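(* The subdivision construction is functorial: for every functor $f:C\to D$ between small categories, $Sd(f):Sd(C)\to Sd(D)$ as described below is a well-defined functor (independent of the choices of representatives and right inverses), $Sd(\mathrm{id}_C)=\mathrm{id}_{Sd(C)}$, and $Sd(g\circ f)=Sd(g)\circ Sd(f)$ for all functors $f:C\to D$, $g:D\to E$.
   Context: For a small category $C$: a $q$-simplex of the nerve $NC$ is a functor $X:[q]\to C$ ($[q]=\{0<\dots<q\}$), i.e. a chain of arrows $f_i:X_{i-1}\to X_i$, $1\le i\le q$; $q_X=q$. It is non-degenerate if no $f_i$ is an identity. $\Delta/C$ has all simplices as objects and as morphisms $X\to Y$ the order-preserving $\xi:[q_X]\to[q_Y]$ with $Y\circ\xi=X$, written $\xi_*$. For a $q$-simplex $X$ and surjective order-preserving $s:[q+1]\to[q]$ with order-preserving right inverses $d,d'$, the morphisms $d_*,d'_*:X\to X\circ s$ are elementary equivalent; $\sim$ is the smallest equivalence relation on morphisms of $\Delta/C$ compatible with composition containing these pairs; $[\Delta/C]$ is the quotient category with morphisms the classes $[\xi_*]$; $Sd(C)$ is its full subcategory on the non-degenerate simplices. For a simplex $X=(f_1,\dots,f_q)$, let $r(X)$ be the non-degenerate simplex obtained by deleting all identity arrows among the $f_i$, of dimension $p_X$ = number of non-identity $f_i$, and let $\alpha_X:[q_X]\to[p_X]$ be the surjective order-preserving map with $\alpha_X(i-1)=\alpha_X(i)$ iff $f_i$ is an identity, so $X=r(X)\circ\alpha_X$. For a functor $f:C\to D$, $Sd(f)$ sends an object $X$ of $Sd(C)$ to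 $r(f\circ X)$, and a morphism $[\xi_*]:X\to Y$ to $[(\alpha_{f\circ Y}\circ\xi\circ\sigma)_*]:r(f\circ X)\to r(f\circ Y)$, where $\sigma$ is an order-preserving right inverse of $\alpha_{f\circ X}$. *)

theory Defs
  imports Main
begin

record ('o, 'a) cat =
  Obj  :: "'o set"
  Arr  :: "'a set"
  Dom  :: "'a \<Rightarrow> 'o"
  Cod  :: "'a \<Rightarrow> 'o"
  Id   :: "'o \<Rightarrow> 'a"
  Comp :: "'a \<Rightarrow> 'a \<Rightarrow> 'a"   (* Comp C g f = g o f, defined when Cod f = Dom g *)

definition is_cat :: "('o, 'a) cat \<Rightarrow> bool" where
  "is_cat C \<longleftrightarrow>
     (\<forall>f\<in>Arr C. Dom C f \<in> Obj C \<and> Cod C f \<in> Obj C) \<and>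
     (\<forall>x\<in>Obj C. Id C x \<in> Arr C \<and> Dom C (Id C x) = x \<and> Cod C (Id C x) = x) \<and>
     (\<forall>f\<in>Arr C. \<forall>g\<in>Arr C. Cod C f = Dom C g \<longrightarrow>
        Comp C g f \<in> Arr C \<and> Dom C (Comp C g f) = Dom C f \<and> Cod C (Comp C g f) = Cod C g) \<and>
     (\<forall>f\<in>Arr C. Comp C (Id C (Cod C f)) f = f \<and> Comp C f (Id C (Dom C f)) = f) \<and>
     (\<forall>f\<in>Arr C. \<forall>g\<in>Arr C. \<forall>h\<in>Arr C. Cod C f = Dom C g \<longrightarrow> Cod C g = Dom C h \<longrightarrow>
        Comp C h (Comp C g f) = Comp C (Comp C h g) f)"

record ('o1, 'a1, 'o2, 'a2) ftor =
  FO :: "'o1 \<Rightarrow> 'o2"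
  FA :: "'a1 \<Rightarrow> 'a2"

definition is_functor :: "('o1, 'a1) cat \<Rightarrow> ('o2, 'a2) cat \<Rightarrow> ('o1, 'a1, 'o2, 'a2) ftor \<Rightarrow> bool" where
  "is_functor C D F \<longleftrightarrow>
     (\<forall>x\<in>Obj C. FO F x \<in> Obj D) \<and>
     (\<forall>f\<in>Arr C. FA F f \<in> Arr D \<and> Dom D (FA F f) = FO F (Dom C f) \<and> Cod D (FA F f) = FO F (Cod C f)) \<and>
     (\<forall>x\<in>Obj C. FA F (Id C x) = Id D (FO F x)) \<and>
     (\<forall>f\<in>Arr C. \<forall>g\<in>Arr C. Cod C f = Dom C g \<longrightarrow> FA F (Comp C g f) = Comp D (FA F g) (FA F f))"

definition id_functor :: "('o, 'a, 'o, 'a) ftor" where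
  "id_functor = \<lparr>FO = id, FA = id\<rparr>"

definition functor_comp :: "('o2, 'a2, 'o3, 'a3) ftor \<Rightarrow> ('o1, 'a1, 'o2, 'a2) ftor \<Rightarrow> ('o1, 'a1, 'o3, 'a3) ftor" where
  "functor_comp G F = \<lparr>FO = FO G \<circ> FO F, FA = FA G \<circ> FA F\<rparr>"

text \<open>A q-simplex X : [q] -> C is represented by its chain (X_0, [f_1, ..., f_q]).
  Its dimension q_X is the length of the arrow list.\<close>

type_synonym ('o, 'a) simplex = "'o \<times> 'a list"

definition dim :: "('o, 'a) simplex \<Rightarrow> nat" where
  "dim X = length (snd X)"

definition vert :: "('o, 'a) cat \<Rightarrow> ('o, 'a) simplex \<Rightarrow> nat \<Rightarrow> 'o" where
  "vert C X i = (if i = 0 then fst X else Cod C (snd X ! (i - 1)))"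

definition is_simplex :: "('o, 'a) cat \<Rightarrow> ('o, 'a) simplex \<Rightarrow> bool" where
  "is_simplex C X \<longleftrightarrow> fst X \<in> Obj C \<and> set (snd X) \<subseteq> Arr C \<and>
     (\<forall>i < dim X. Dom C (snd X ! i) = vert C X i)"

text \<open>The arrow X(i \<le> j) : X_i -> X_j, i.e. f_j o ... o f_{i+1} (identity if j \<le> i).\<close>
primrec btw :: "('o, 'a) cat \<Rightarrow> ('o, 'a) simplex \<Rightarrow> nat \<Rightarrow> nat \<Rightarrow> 'a" where
  "btw C X i 0 = Id C (vert C X i)"
| "btw C X i (Suc j) = (if Suc j \<le> i then Id C (vert C X i) else Comp C (snd X ! j) (btw C X i j))"

definition is_identity :: "('o, 'a) cat \<Rightarrow> 'a \<Rightarrow> bool" where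
  "is_identity C a \<longleftrightarrow> (\<exists>x\<in>Obj C. a = Id C x)"

definition nondeg :: "('o, 'a) cat \<Rightarrow> ('o, 'a) simplex \<Rightarrow> bool" where
  "nondeg C X \<longleftrightarrow> is_simplex C X \<and> (\<forall>a\<in>set (snd X). \<not> is_identity C a)"

text \<open>Order-preserving maps [p] -> [q], represented as the list of values xi(0), ..., xi(p).\<close>
definition ord_map :: "nat list \<Rightarrow> nat \<Rightarrow> nat \<Rightarrow> bool" where
  "ord_map \<xi> p q \<longleftrightarrow> length \<xi> = Suc p \<and> sorted \<xi> \<and> (\<forall>i\<in>set \<xi>. i \<le> q)"

definition map_comp :: "nat list \<Rightarrow> nat list \<Rightarrow> nat list" where
  "map_comp \<eta> \<xi> = map (\<lambda>i. \<eta> ! i) \<xi>"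

text \<open>The composite simplex Y o xi for xi : [p] -> [q_Y].\<close>
definition simp_comp :: "('o, 'a) cat \<Rightarrow> ('o, 'a) simplex \<Rightarrow> nat list \<Rightarrow> ('o, 'a) simplex" where
  "simp_comp C Y \<xi> = (vert C Y (\<xi> ! 0), map (\<lambda>j. btw C Y (\<xi> ! (j - 1)) (\<xi> ! j)) [1..<length \<xi>])"

definition fsimp :: "('o1, 'a1, 'o2, 'a2) ftor \<Rightarrow> ('o1, 'a1) simplex \<Rightarrow> ('o2, 'a2) simplex" where
  "fsimp F X = (FO F (fst X), map (FA F) (snd X))"

type_synonym ('o, 'a) dmor = "('o, 'a) simplex \<times> ('o, 'a) simplex \<times> nat list"

definition src :: "('o, 'a) dmor \<Rightarrow> ('o, 'a) simplex" where "src m = fst m"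
definition tgt :: "('o, 'a) dmor \<Rightarrow> ('o, 'a) simplex" where "tgt m = fst (snd m)"
definition mapof :: "('o, 'a) dmor \<Rightarrow> nat list" where "mapof m = snd (snd m)"

definition is_dmor :: "('o, 'a) cat \<Rightarrow> ('o, 'a) dmor \<Rightarrow> bool" where
  "is_dmor C m \<longleftrightarrow> is_simplex C (src m) \<and> is_simplex C (tgt m) \<and>
     ord_map (mapof m) (dim (src m)) (dim (tgt m)) \<and> simp_comp C (tgt m) (mapof m) = src m"

definition dcomp :: "('o, 'a) dmor \<Rightarrow> ('o, 'a) dmor \<Rightarrow> ('o, 'a) dmor" where
  "dcomp n m = (src m, tgt n, map_comp (mapof n) (mapof m))"

definition did :: "('o, 'a) simplex \<Rightarrow> ('o, 'a) dmor" where
  "did X = (X, X, [0..<Suc (dim X)])"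

definition is_surj_deg :: "nat list \<Rightarrow> nat \<Rightarrow> bool" where
  "is_surj_deg s q \<longleftrightarrow> ord_map s (Suc q) q \<and> set s = {0..q}"

definition is_rinv :: "nat list \<Rightarrow> nat list \<Rightarrow> nat \<Rightarrow> nat \<Rightarrow> bool" where
  "is_rinv \<sigma> \<alpha> p q \<longleftrightarrow> ord_map \<sigma> p q \<and> map_comp \<alpha> \<sigma> = [0..<Suc p]"

inductive dsim :: "('o, 'a) cat \<Rightarrow> ('o, 'a) dmor \<Rightarrow> ('o, 'a) dmor \<Rightarrow> bool" for C where
  elem: "\<lbrakk> is_simplex C X; is_surj_deg s (dim X);
           is_rinv d s (dim X) (Suc (dim X)); is_rinv d' s (dim X) (Suc (dim X)) \<rbrakk>
         \<Longrightarrow> dsim C (X, simp_comp C X s, d) (X, simp_comp C X s, d')"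
| refl: "is_dmor C m \<Longrightarrow> dsim C m m"
| sym: "dsim C m m' \<Longrightarrow> dsim C m' m"
| trans: "dsim C m m' \<Longrightarrow> dsim C m' m'' \<Longrightarrow> dsim C m m''"
| post: "\<lbrakk> dsim C m m'; is_dmor C n; src n = tgt m \<rbrakk> \<Longrightarrow> dsim C (dcomp n m) (dcomp n m')"
| pre: "\<lbrakk> dsim C m m'; is_dmor C n; tgt n = src m \<rbrakk> \<Longrightarrow> dsim C (dcomp m n) (dcomp m' n)"

text \<open>Morphisms of Sd(C) are ~-classes of Delta/C morphisms between non-degenerate simplices;
  we work with representatives.\<close>
definition is_sd_mor :: "('o, 'a) cat \<Rightarrow> ('o, 'a) dmor \<Rightarrow> bool" where
  "is_sd_mor C m \<longleftrightarrow> is_dmor C m \<and> nondeg C (src m) \<and> nondeg C (tgt m)"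

definition rr :: "('o, 'a) cat \<Rightarrow> ('o, 'a) simplex \<Rightarrow> ('o, 'a) simplex" where
  "rr C X = (fst X, filter (\<lambda>a. \<not> is_identity C a) (snd X))"

definition alpha :: "('o, 'a) cat \<Rightarrow> ('o, 'a) simplex \<Rightarrow> nat list" where
  "alpha C X = map (\<lambda>i. length (filter (\<lambda>a. \<not> is_identity C a) (take i (snd X)))) [0..<Suc (dim X)]"

definition Sd_obj :: "('o2, 'a2) cat \<Rightarrow> ('o1, 'a1, 'o2, 'a2) ftor \<Rightarrow> ('o1, 'a1) simplex \<Rightarrow> ('o2, 'a2) simplex" where
  "Sd_obj D F X = rr D (fsimp F X)"

text \<open>Sd(f) on a representative m = xi_* : X -> Y, given a right inverse sigma of alpha_{f o X}:
  (alpha_{f o Y} o xi o sigma)_* : r(f o X) -> r(f o Y).\<close>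
definition Sd_mor :: "('o2, 'a2) cat \<Rightarrow> ('o1, 'a1, 'o2, 'a2) ftor \<Rightarrow> ('o1, 'a1) dmor \<Rightarrow> nat list
                       \<Rightarrow> ('o2, 'a2) dmor" where
  "Sd_mor D F m \<sigma> = (Sd_obj D F (src m), Sd_obj D F (tgt m),
                      map_comp (alpha D (fsimp F (tgt m))) (map_comp (mapof m) \<sigma>))"

definition sd_choice :: "('o2, 'a2) cat \<Rightarrow> ('o1, 'a1, 'o2, 'a2) ftor \<Rightarrow> ('o1, 'a1) simplex \<Rightarrow> nat list \<Rightarrow> bool" where
  "sd_choice D F X \<sigma> \<longleftrightarrow> is_rinv \<sigma> (alpha D (fsimp F X)) (dim (Sd_obj D F X)) (dim X)"

end

theory Submission
  imports Defs
begin

text \<open>Everything reduces to one criterion: two morphisms \<open>T \<rightarrow> W\<close> of \<open>\<Delta>/C\<close> are equivalent as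
  soon as, vertex by vertex, the arrow of \<open>W\<close> between the two chosen vertices is an identity.
  Indeed both are then equivalent to their pointwise maximum, which is reached by moving one vertex
  at a time, and a single move is an elementary equivalence composed with a map \<open>[k+1] \<rightarrow> W\<close>.
  The degeneracy \<open>\<alpha>\<^sub>Y\<close> identifies exactly vertices of \<open>Y\<close> joined by identities, and \<open>f\<close> maps
  identities to identities; hence changing the right inverse, the representative, composing, or
  passing from \<open>Sd(g) \<circ> Sd(f)\<close> to \<open>Sd(g \<circ> f)\<close> only moves vertices along identities.\<close>

declare upt_Suc[simp del]

locale category =
  fixes C :: "('o, 'a) cat"
  assumes is_cat: "is_cat C"
begin

lemma dom_cod_obj: "f \<in> Arr C \<Longrightarrow> Dom C f \<in> Obj C \<and> Cod C f \<in> Obj C"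
  using is_cat unfolding is_cat_def by blast

lemma Id_arr: "x \<in> Obj C \<Longrightarrow> Id C x \<in> Arr C \<and> Dom C (Id C x) = x \<and> Cod C (Id C x) = x"
  using is_cat unfolding is_cat_def by blast

lemma Comp_arr: "f \<in> Arr C \<Longrightarrow> g \<in> Arr C \<Longrightarrow> Cod C f = Dom C g \<Longrightarrow>
    Comp C g f \<in> Arr C \<and> Dom C (Comp C g f) = Dom C f \<and> Cod C (Comp C g f) = Cod C g"
  using is_cat unfolding is_cat_def by blast

lemma Comp_Id_left: "f \<in> Arr C \<Longrightarrow> Comp C (Id C (Cod C f)) f = f"
  using is_cat unfolding is_cat_def by blast

lemma Comp_Id_right: "f \<in> Arr C \<Longrightarrow> Comp C f (Id C (Dom C f)) = f"
  using is_cat unfolding is_cat_def by blast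

lemma Comp_assoc: "f \<in> Arr C \<Longrightarrow> g \<in> Arr C \<Longrightarrow> h \<in> Arr C \<Longrightarrow>
    Cod C f = Dom C g \<Longrightarrow> Cod C g = Dom C h \<Longrightarrow>
    Comp C h (Comp C g f) = Comp C (Comp C h g) f"
  using is_cat unfolding is_cat_def by blast

lemma is_identity_Id: "x \<in> Obj C \<Longrightarrow> is_identity C (Id C x)"
  by (auto simp: is_identity_def)

lemma is_identityD: "is_identity C a \<Longrightarrow> a \<in> Arr C \<Longrightarrow> a = Id C (Dom C a) \<and> Cod C a = Dom C a"
  unfolding is_identity_def using Id_arr by auto

lemma vert_0 [simp]: "vert C X 0 = fst X"
  by (simp add: vert_def)

lemma vert_Suc [simp]: "vert C X (Suc i) = Cod C (snd X ! i)"
  by (simp add: vert_def)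

lemma simplex_arr: "is_simplex C X \<Longrightarrow> j < dim X \<Longrightarrow>
    snd X ! j \<in> Arr C \<and> Dom C (snd X ! j) = vert C X j"
  unfolding is_simplex_def dim_def by auto

lemma simplex_vert_obj:
  assumes "is_simplex C X" "i \<le> dim X"
  shows "vert C X i \<in> Obj C"
proof (cases i)
  case 0
  then show ?thesis using assms unfolding is_simplex_def by auto
next
  case (Suc j)
  then show ?thesis using assms simplex_arr[of X j] dom_cod_obj by auto
qed

lemma btw_below: "j \<le> i \<Longrightarrow> btw C X i j = Id C (vert C X i)"
  by (induction j) auto

lemma btw_arr:
  assumes "is_simplex C X" "i \<le> j" "j \<le> dim X"
  shows "btw C X i j \<in> Arr C \<and> Dom C (btw C X i j) = vert C X i \<and> Cod C (btw C X i j) = vert C X j"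
  using assms(2,3)
proof (induction j)
  case 0
  then show ?case using Id_arr[of "fst X"] simplex_vert_obj[OF assms(1), of 0] by auto
next
  case (Suc j)
  show ?case
  proof (cases "Suc j \<le> i")
    case True
    then have "i = Suc j" using Suc by auto
    then show ?thesis using Suc Id_arr simplex_vert_obj[OF assms(1), of i] by auto
  next
    case False
    then show ?thesis
      using Suc simplex_arr[OF assms(1), of j] Comp_arr[of "btw C X i j" "snd X ! j"] by auto
  qed
qed

lemma btw_trans:
  assumes "is_simplex C X" "i \<le> j" "j \<le> k" "k \<le> dim X"
  shows "btw C X i k = Comp C (btw C X j k) (btw C X i j)"
  using assms(3,4)
proof (induction k)
  case 0
  then show ?case
    using assms(2) btw_arr[OF assms(1), of 0 0] Comp_Id_left[of "Id C (fst X)"] by auto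
next
  case (Suc k)
  show ?case
  proof (cases "j = Suc k")
    case True
    then show ?thesis
      using btw_below[of j j X] btw_arr[OF assms(1) assms(2)] Suc.prems Comp_Id_left by metis
  next
    case False
    then have jk: "j \<le> k" using Suc by auto
    have a: "snd X ! k \<in> Arr C" "Dom C (snd X ! k) = vert C X k"
      using simplex_arr[OF assms(1), of k] Suc by auto
    have "btw C X i (Suc k) = Comp C (snd X ! k) (Comp C (btw C X j k) (btw C X i j))"
      using Suc assms(2) jk by auto
    also have "\<dots> = Comp C (Comp C (snd X ! k) (btw C X j k)) (btw C X i j)"
      using Comp_assoc a btw_arr[OF assms(1)] assms(2) jk Suc.prems by auto
    also have "\<dots> = Comp C (btw C X j (Suc k)) (btw C X i j)"
      using jk by auto
    finally show ?thesis .
  qed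
qed

lemma btw_Suc: "is_simplex C X \<Longrightarrow> j < dim X \<Longrightarrow> btw C X j (Suc j) = snd X ! j"
  using simplex_arr[of X j] Comp_Id_right[of "snd X ! j"] btw_below[of j j X] by simp

lemma simplex_eqI:
  assumes "is_simplex C A" "is_simplex C B" "fst A = fst B" "dim A = dim B"
    and "\<And>j. j < dim A \<Longrightarrow> btw C A j (Suc j) = btw C B j (Suc j)"
  shows "A = B"
  using assms btw_Suc by (metis dim_def nth_equalityI prod_eqI)

end

lemma ord_map_length: "ord_map \<xi> p q \<Longrightarrow> length \<xi> = Suc p"
  by (simp add: ord_map_def)

lemma ord_map_bound: "ord_map \<xi> p q \<Longrightarrow> i \<le> p \<Longrightarrow> \<xi> ! i \<le> q"
  unfolding ord_map_def by (metis less_Suc_eq_le nth_mem)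

lemma ord_map_mono: "ord_map \<xi> p q \<Longrightarrow> i \<le> j \<Longrightarrow> j \<le> p \<Longrightarrow> \<xi> ! i \<le> \<xi> ! j"
  unfolding ord_map_def by (simp add: sorted_nth_mono)

lemma ord_mapI:
  assumes "length \<xi> = Suc p" "\<And>i. i \<le> p \<Longrightarrow> \<xi> ! i \<le> q"
    and "\<And>i j. i \<le> j \<Longrightarrow> j \<le> p \<Longrightarrow> \<xi> ! i \<le> \<xi> ! j"
  shows "ord_map \<xi> p q"
  using assms unfolding ord_map_def
  by (metis in_set_conv_nth less_Suc_eq_le sorted_iff_nth_mono)

lemma map_comp_nth: "i < length \<xi> \<Longrightarrow> map_comp \<eta> \<xi> ! i = \<eta> ! (\<xi> ! i)"
  by (simp add: map_comp_def)

lemma length_map_comp [simp]: "length (map_comp \<eta> \<xi>) = length \<xi>"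
  by (simp add: map_comp_def)

lemma ord_map_comp: "ord_map \<eta> p q \<Longrightarrow> ord_map \<xi> r p \<Longrightarrow> ord_map (map_comp \<eta> \<xi>) r q"
  by (rule ord_mapI) (simp_all add: map_comp_nth ord_map_length ord_map_bound ord_map_mono)

lemma ord_map_id: "ord_map [0..<Suc q] q q"
  by (rule ord_mapI) auto

lemma map_comp_id_left: "ord_map \<xi> r q \<Longrightarrow> map_comp [0..<Suc q] \<xi> = \<xi>"
  unfolding map_comp_def
  by (auto intro!: nth_equalityI simp: ord_map_length ord_map_bound less_Suc_eq_le)

lemma map_comp_id_right: "length \<xi> = Suc r \<Longrightarrow> map_comp \<xi> [0..<Suc r] = \<xi>"
  unfolding map_comp_def by (auto intro!: nth_equalityI)

lemma map_comp_nth_eq_self: "map_comp \<alpha> \<sigma> = [0..<Suc p] \<Longrightarrow> i \<le> p \<Longrightarrow> \<alpha> ! (\<sigma> ! i) = i"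
  by (metis length_map_comp length_upt less_Suc_eq_le map_comp_nth minus_nat.diff_0 nth_upt
      plus_nat.add_0)

lemma is_rinv_nth: "is_rinv \<sigma> \<alpha> p q \<Longrightarrow> i \<le> p \<Longrightarrow> \<alpha> ! (\<sigma> ! i) = i"
  unfolding is_rinv_def using map_comp_nth_eq_self by blast

lemma is_rinvI:
  assumes "ord_map \<sigma> p q" "\<And>i. i \<le> p \<Longrightarrow> \<alpha> ! (\<sigma> ! i) = i"
  shows "is_rinv \<sigma> \<alpha> p q"
  using assms unfolding is_rinv_def
  by (auto intro!: nth_equalityI simp: map_comp_nth ord_map_length less_Suc_eq_le)

context category
begin

lemma dim_simp_comp: "length \<xi> = Suc p \<Longrightarrow> dim (simp_comp C Y \<xi>) = p"
  by (simp add: simp_comp_def dim_def)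

lemma fst_simp_comp: "fst (simp_comp C Y \<xi>) = vert C Y (\<xi> ! 0)"
  by (simp add: simp_comp_def)

lemma simp_comp_nth:
  "length \<xi> = Suc p \<Longrightarrow> j < p \<Longrightarrow> snd (simp_comp C Y \<xi>) ! j = btw C Y (\<xi> ! j) (\<xi> ! Suc j)"
  by (simp add: simp_comp_def)

lemma vert_simp_comp:
  assumes "is_simplex C Y" "ord_map \<xi> p (dim Y)" "i \<le> p"
  shows "vert C (simp_comp C Y \<xi>) i = vert C Y (\<xi> ! i)"
proof (cases i)
  case 0
  then show ?thesis by (simp add: fst_simp_comp)
next
  case (Suc j)
  then show ?thesis
    using assms simp_comp_nth ord_map_length btw_arr[OF assms(1), of "\<xi> ! j" "\<xi> ! Suc j"]
      ord_map_mono[OF assms(2), of j "Suc j"] ord_map_bound[OF assms(2)] by auto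
qed

lemma simplex_simp_comp:
  assumes "is_simplex C Y" "ord_map \<xi> p (dim Y)"
  shows "is_simplex C (simp_comp C Y \<xi>)"
proof -
  have dim: "dim (simp_comp C Y \<xi>) = p"
    using dim_simp_comp ord_map_length assms by blast
  have "snd (simp_comp C Y \<xi>) ! j \<in> Arr C \<and>
      Dom C (snd (simp_comp C Y \<xi>) ! j) = vert C (simp_comp C Y \<xi>) j" if "j < p" for j
    using that simp_comp_nth[OF ord_map_length[OF assms(2)]] vert_simp_comp[OF assms, of j]
      btw_arr[OF assms(1), of "\<xi> ! j" "\<xi> ! Suc j"] ord_map_mono[OF assms(2), of j "Suc j"]
      ord_map_bound[OF assms(2), of "Suc j"] by auto
  moreover have "fst (simp_comp C Y \<xi>) \<in> Obj C"
    using fst_simp_comp simplex_vert_obj[OF assms(1)] ord_map_bound[OF assms(2)] by auto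
  ultimately show ?thesis
    using dim unfolding is_simplex_def by (metis dim_def in_set_conv_nth subsetI)
qed

lemma btw_simp_comp:
  assumes "is_simplex C Y" "ord_map \<xi> p (dim Y)" "i \<le> p" "j \<le> p"
  shows "btw C (simp_comp C Y \<xi>) i j = btw C Y (\<xi> ! i) (\<xi> ! j)"
  using assms(4)
proof (induction j)
  case 0
  then show ?case
    using btw_below ord_map_mono[OF assms(2), of 0 i] assms vert_simp_comp by simp
next
  case (Suc j)
  show ?case
  proof (cases "Suc j \<le> i")
    case True
    then show ?thesis
      using btw_below ord_map_mono[OF assms(2), of "Suc j" i] assms vert_simp_comp by simp
  next
    case False
    have le: "\<xi> ! i \<le> \<xi> ! j" "\<xi> ! j \<le> \<xi> ! Suc j" "\<xi> ! Suc j \<le> dim Y"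
      using False Suc assms ord_map_mono ord_map_bound by auto
    have "btw C (simp_comp C Y \<xi>) i (Suc j) =
        Comp C (btw C Y (\<xi> ! j) (\<xi> ! Suc j)) (btw C Y (\<xi> ! i) (\<xi> ! j))"
      using False Suc simp_comp_nth[OF ord_map_length[OF assms(2)], of j Y] by simp
    also have "\<dots> = btw C Y (\<xi> ! i) (\<xi> ! Suc j)"
      using btw_trans[OF assms(1) le] by simp
    finally show ?thesis .
  qed
qed

lemma simp_comp_simp_comp:
  assumes "is_simplex C Y" "ord_map \<eta> p (dim Y)" "ord_map \<xi> r p"
  shows "simp_comp C (simp_comp C Y \<eta>) \<xi> = simp_comp C Y (map_comp \<eta> \<xi>)"
proof (rule simplex_eqI)
  have Y\<eta>: "is_simplex C (simp_comp C Y \<eta>)" "dim (simp_comp C Y \<eta>) = p"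
    using simplex_simp_comp dim_simp_comp ord_map_length assms by blast+
  have \<eta>\<xi>: "ord_map (map_comp \<eta> \<xi>) r (dim Y)"
    using ord_map_comp assms by blast
  have len: "length \<xi> = Suc r"
    using ord_map_length[OF assms(3)] .
  show "is_simplex C (simp_comp C (simp_comp C Y \<eta>) \<xi>)"
    using simplex_simp_comp Y\<eta> assms by auto
  show "is_simplex C (simp_comp C Y (map_comp \<eta> \<xi>))"
    using simplex_simp_comp \<eta>\<xi> assms by auto
  show "fst (simp_comp C (simp_comp C Y \<eta>) \<xi>) = fst (simp_comp C Y (map_comp \<eta> \<xi>))"
    using fst_simp_comp vert_simp_comp[OF assms(1,2)] ord_map_bound[OF assms(3)]
      map_comp_nth[of 0 \<xi> \<eta>] len by simp
  show "dim (simp_comp C (simp_comp C Y \<eta>) \<xi>) = dim (simp_comp C Y (map_comp \<eta> \<xi>))"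
    using dim_simp_comp len by simp
  fix j
  assume "j < dim (simp_comp C (simp_comp C Y \<eta>) \<xi>)"
  then have j: "j < r"
    using dim_simp_comp len by simp
  then show "btw C (simp_comp C (simp_comp C Y \<eta>) \<xi>) j (Suc j) =
      btw C (simp_comp C Y (map_comp \<eta> \<xi>)) j (Suc j)"
    using btw_simp_comp[OF Y\<eta>(1), of \<xi> r j "Suc j"] Y\<eta>(2) assms(3)
      btw_simp_comp[OF assms(1,2)] ord_map_bound[OF assms(3)]
      btw_simp_comp[OF assms(1) \<eta>\<xi>, of j "Suc j"] map_comp_nth len by simp
qed

lemma simp_comp_id:
  assumes "is_simplex C Y"
  shows "simp_comp C Y [0..<Suc (dim Y)] = Y"
proof (rule simplex_eqI)
  show "is_simplex C (simp_comp C Y [0..<Suc (dim Y)])"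
    using simplex_simp_comp ord_map_id assms by blast
  fix j
  assume "j < dim (simp_comp C Y [0..<Suc (dim Y)])"
  then show "btw C (simp_comp C Y [0..<Suc (dim Y)]) j (Suc j) = btw C Y j (Suc j)"
    using btw_simp_comp[OF assms ord_map_id, of j "Suc j"] by (simp add: dim_simp_comp)
qed (simp_all add: assms fst_simp_comp dim_simp_comp)

end

locale cat_functor = C: category C + D: category D
  for C :: "('o1, 'a1) cat" and D :: "('o2, 'a2) cat" +
  fixes F :: "('o1, 'a1, 'o2, 'a2) ftor"
  assumes is_functor: "is_functor C D F"
begin

lemma FO_obj: "x \<in> Obj C \<Longrightarrow> FO F x \<in> Obj D"
  using is_functor unfolding is_functor_def by blast

lemma FA_arr: "f \<in> Arr C \<Longrightarrow>
    FA F f \<in> Arr D \<and> Dom D (FA F f) = FO F (Dom C f) \<and> Cod D (FA F f) = FO F (Cod C f)"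
  using is_functor unfolding is_functor_def by blast

lemma FA_Id: "x \<in> Obj C \<Longrightarrow> FA F (Id C x) = Id D (FO F x)"
  using is_functor unfolding is_functor_def by blast

lemma FA_Comp: "f \<in> Arr C \<Longrightarrow> g \<in> Arr C \<Longrightarrow> Cod C f = Dom C g \<Longrightarrow>
    FA F (Comp C g f) = Comp D (FA F g) (FA F f)"
  using is_functor unfolding is_functor_def by blast

lemma FA_identity: "is_identity C a \<Longrightarrow> is_identity D (FA F a)"
  unfolding is_identity_def using FA_Id FO_obj by blast

lemma dim_fsimp [simp]: "dim (fsimp F X) = dim X"
  by (simp add: fsimp_def dim_def)

lemma fst_fsimp [simp]: "fst (fsimp F X) = FO F (fst X)"
  by (simp add: fsimp_def)

lemma fsimp_nth: "j < dim X \<Longrightarrow> snd (fsimp F X) ! j = FA F (snd X ! j)"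
  by (simp add: fsimp_def dim_def)

lemma vert_fsimp: "is_simplex C X \<Longrightarrow> i \<le> dim X \<Longrightarrow> vert D (fsimp F X) i = FO F (vert C X i)"
  by (cases i) (auto simp: fsimp_nth FA_arr C.simplex_arr)

lemma simplex_fsimp:
  assumes "is_simplex C X"
  shows "is_simplex D (fsimp F X)"
  unfolding is_simplex_def
proof (intro conjI allI impI)
  show "fst (fsimp F X) \<in> Obj D"
    using assms FO_obj unfolding is_simplex_def by simp
  show "set (snd (fsimp F X)) \<subseteq> Arr D"
    using assms FA_arr unfolding is_simplex_def fsimp_def by auto
  fix i
  assume "i < dim (fsimp F X)"
  then show "Dom D (snd (fsimp F X) ! i) = vert D (fsimp F X) i"
    using assms fsimp_nth FA_arr C.simplex_arr vert_fsimp by auto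
qed

lemma btw_fsimp:
  assumes "is_simplex C X" "i \<le> dim X" "j \<le> dim X"
  shows "btw D (fsimp F X) i j = FA F (btw C X i j)"
  using assms(3)
proof (induction j)
  case 0
  then show ?case using vert_fsimp assms FA_Id C.simplex_vert_obj by simp
next
  case (Suc j)
  show ?case
  proof (cases "Suc j \<le> i")
    case True
    then show ?thesis using vert_fsimp assms FA_Id C.simplex_vert_obj by simp
  next
    case False
    have "snd X ! j \<in> Arr C" "Dom C (snd X ! j) = vert C X j"
      using C.simplex_arr assms Suc by auto
    moreover have "btw C X i j \<in> Arr C" "Cod C (btw C X i j) = vert C X j"
      using C.btw_arr assms Suc False by auto
    ultimately show ?thesis
      using False Suc fsimp_nth[of j X] FA_Comp by simp
  qed
qed

lemma fsimp_simp_comp: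
  assumes "is_simplex C Y" "ord_map \<xi> p (dim Y)"
  shows "fsimp F (simp_comp C Y \<xi>) = simp_comp D (fsimp F Y) \<xi>"
proof (rule D.simplex_eqI)
  have Y\<xi>: "is_simplex C (simp_comp C Y \<xi>)" "dim (simp_comp C Y \<xi>) = p"
    using C.simplex_simp_comp C.dim_simp_comp ord_map_length assms by blast+
  show "is_simplex D (fsimp F (simp_comp C Y \<xi>))"
    using simplex_fsimp Y\<xi> by blast
  show "is_simplex D (simp_comp D (fsimp F Y) \<xi>)"
    using D.simplex_simp_comp simplex_fsimp assms by simp
  show "fst (fsimp F (simp_comp C Y \<xi>)) = fst (simp_comp D (fsimp F Y) \<xi>)"
    using C.fst_simp_comp D.fst_simp_comp vert_fsimp assms ord_map_bound by simp
  show "dim (fsimp F (simp_comp C Y \<xi>)) = dim (simp_comp D (fsimp F Y) \<xi>)"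
    using Y\<xi> D.dim_simp_comp ord_map_length assms by simp
  fix j
  assume "j < dim (fsimp F (simp_comp C Y \<xi>))"
  then have j: "j < p"
    using Y\<xi> by simp
  have "btw D (fsimp F (simp_comp C Y \<xi>)) j (Suc j) = FA F (btw C Y (\<xi> ! j) (\<xi> ! Suc j))"
    using btw_fsimp[OF Y\<xi>(1), of j "Suc j"] Y\<xi>(2) j C.btw_simp_comp[OF assms, of j "Suc j"]
    by (simp del: btw.simps)
  also have "\<dots> = btw D (simp_comp D (fsimp F Y) \<xi>) j (Suc j)"
    using D.btw_simp_comp[OF simplex_fsimp[OF assms(1)], of \<xi> p j "Suc j"] assms j btw_fsimp
      ord_map_bound by (simp del: btw.simps)
  finally show "btw D (fsimp F (simp_comp C Y \<xi>)) j (Suc j) =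
      btw D (simp_comp D (fsimp F Y) \<xi>) j (Suc j)" .
qed

end

lemma is_functor_functor_comp:
  "is_functor C D F \<Longrightarrow> is_functor D E G \<Longrightarrow> is_functor C E (functor_comp G F)"
  unfolding is_functor_def functor_comp_def by auto

lemma fsimp_functor_comp: "fsimp (functor_comp G F) X = fsimp G (fsimp F X)"
  by (simp add: fsimp_def functor_comp_def)

lemma fsimp_id_functor: "fsimp id_functor X = X"
  by (simp add: fsimp_def id_functor_def)

lemma length_alpha [simp]: "length (alpha C V) = Suc (dim V)"
  by (simp add: alpha_def)

lemma alpha_nth:
  "i \<le> dim V \<Longrightarrow> alpha C V ! i = length (filter (\<lambda>a. \<not> is_identity C a) (take i (snd V)))"
  by (simp add: alpha_def nth_upt less_Suc_eq_le)

lemma fst_rr [simp]: "fst (rr C V) = fst V"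
  by (simp add: rr_def)

lemma length_filter_take_mono:
  "i \<le> j \<Longrightarrow> length (filter P (take i xs)) \<le> length (filter P (take j xs))"
  by (metis le_Suc_ex length_append take_add filter_append le_add1)

lemma ord_map_alpha: "ord_map (alpha C V) (dim V) (dim (rr C V))"
proof (rule ord_mapI)
  fix i
  assume "i \<le> dim V"
  then show "alpha C V ! i \<le> dim (rr C V)"
    using length_filter_take_mono[of i "length (snd V)" _ "snd V"]
    by (simp add: alpha_nth rr_def dim_def)
qed (simp_all add: alpha_nth length_filter_take_mono)

lemma alpha_0 [simp]: "alpha C V ! 0 = 0"
  by (simp add: alpha_nth)

lemma alpha_Suc: "i < dim V \<Longrightarrow>
    alpha C V ! Suc i = alpha C V ! i + (if is_identity C (snd V ! i) then 0 else 1)"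
  by (simp add: alpha_nth take_Suc_conv_app_nth dim_def)

lemma alpha_bound: "i \<le> dim V \<Longrightarrow> alpha C V ! i \<le> dim (rr C V)"
  using ord_map_alpha ord_map_bound by blast

lemma filter_nth_length_filter_take:
  assumes "P (xs ! j)" "j < length xs"
  shows "filter P xs ! length (filter P (take j xs)) = xs ! j"
proof -
  have "filter P xs = filter P (take j xs) @ xs ! j # filter P (drop (Suc j) xs)"
    using id_take_nth_drop[OF assms(2)] assms(1) by (metis filter.simps(2) filter_append)
  then show ?thesis by (simp add: nth_append)
qed

lemma rr_nth_alpha:
  "j < dim V \<Longrightarrow> \<not> is_identity C (snd V ! j) \<Longrightarrow> snd (rr C V) ! (alpha C V ! j) = snd V ! j"
  using filter_nth_length_filter_take[of "\<lambda>a. \<not> is_identity C a" "snd V" j]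
  by (simp add: rr_def alpha_nth dim_def)

lemma filter_map_filter:
  "(\<And>a. Q a \<Longrightarrow> P (g a)) \<Longrightarrow>
    filter (\<lambda>b. \<not> P b) (map g (filter (\<lambda>a. \<not> Q a) xs)) = filter (\<lambda>b. \<not> P b) (map g xs)"
  by (induction xs) auto

lemma take_length_filter_take:
  "take (length (filter P (take j xs))) (filter P xs) = filter P (take j xs)"
  by (metis append_eq_conv_conj append_take_drop_id filter_append)

lemma rr_fsimp_rr:
  assumes "\<And>a. is_identity D a \<Longrightarrow> is_identity E (FA G a)"
  shows "rr E (fsimp G (rr D V)) = rr E (fsimp G V)"
  using filter_map_filter[where P = "is_identity E" and Q = "is_identity D", OF assms]
  by (simp add: rr_def fsimp_def)

lemma alpha_fsimp_rr:
  assumes "\<And>a. is_identity D a \<Longrightarrow> is_identity E (FA G a)" "j \<le> dim V"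
  shows "alpha E (fsimp G (rr D V)) ! (alpha D V ! j) = alpha E (fsimp G V) ! j"
proof -
  let ?nid = "\<lambda>a. \<not> is_identity D a" and ?nid' = "\<lambda>a. \<not> is_identity E a"
  have "alpha D V ! j \<le> dim (fsimp G (rr D V))"
    using alpha_bound[OF assms(2)] by (simp add: fsimp_def dim_def)
  then have "alpha E (fsimp G (rr D V)) ! (alpha D V ! j) =
      length (filter ?nid' (take (alpha D V ! j) (map (FA G) (filter ?nid (snd V)))))"
    by (simp add: alpha_nth) (simp add: fsimp_def rr_def)
  also have "\<dots> = length (filter ?nid' (map (FA G) (filter ?nid (take j (snd V)))))"
    unfolding alpha_nth[OF assms(2)] take_map take_length_filter_take ..
  also have "\<dots> = length (filter ?nid' (map (FA G) (take j (snd V))))"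
    by (simp only: filter_map_filter[where P = "is_identity E" and Q = "is_identity D", OF assms(1)])
  also have "\<dots> = alpha E (fsimp G V) ! j"
    using alpha_nth[of j "fsimp G V" E] assms(2) by (simp add: fsimp_def take_map dim_def)
  finally show ?thesis .
qed

context category
begin

lemma simplex_Cons_iff:
  "is_simplex C (x, a # as) \<longleftrightarrow> x \<in> Obj C \<and> a \<in> Arr C \<and> Dom C a = x \<and> is_simplex C (Cod C a, as)"
proof -
  have vert_Cons: "vert C (x, a # as) (Suc i) = vert C (Cod C a, as) i" for i
    by (cases i) (auto simp: vert_def)
  show ?thesis
  proof
    assume "is_simplex C (x, a # as)"
    then have h: "x \<in> Obj C" "a \<in> Arr C" "set as \<subseteq> Arr C"
      "\<And>i. i < Suc (length as) \<Longrightarrow> Dom C ((a # as) ! i) = vert C (x, a # as) i"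
      unfolding is_simplex_def dim_def by auto
    moreover have "is_simplex C (Cod C a, as)"
      unfolding is_simplex_def dim_def using h dom_cod_obj[of a] h(4)[of "Suc _"] vert_Cons by auto
    ultimately show "x \<in> Obj C \<and> a \<in> Arr C \<and> Dom C a = x \<and> is_simplex C (Cod C a, as)"
      using h(4)[of 0] by simp
  next
    assume "x \<in> Obj C \<and> a \<in> Arr C \<and> Dom C a = x \<and> is_simplex C (Cod C a, as)"
    then show "is_simplex C (x, a # as)"
      unfolding is_simplex_def dim_def using vert_Cons by (auto simp: less_Suc_eq_0_disj)
  qed
qed

lemma simplex_rr: "is_simplex C V \<Longrightarrow> is_simplex C (rr C V)"
proof (induction "snd V" arbitrary: V)
  case Nil
  then show ?case by (simp add: rr_def) (metis prod.collapse)
next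
  case (Cons a as)
  obtain x where V: "V = (x, a # as)"
    using Cons.hyps(2) by (metis prod.collapse)
  have h: "x \<in> Obj C" "a \<in> Arr C" "Dom C a = x" "is_simplex C (Cod C a, as)"
    using Cons.prems simplex_Cons_iff V by auto
  have IH: "is_simplex C (Cod C a, filter (\<lambda>a. \<not> is_identity C a) as)"
    using Cons.hyps(1)[of "(Cod C a, as)"] h by (simp add: rr_def)
  show ?case
  proof (cases "is_identity C a")
    case True
    then show ?thesis using IH is_identityD h V by (auto simp: rr_def)
  next
    case False
    then show ?thesis using IH h V simplex_Cons_iff by (simp add: rr_def)
  qed
qed

lemma nondeg_rr: "is_simplex C V \<Longrightarrow> nondeg C (rr C V)"
  unfolding nondeg_def using simplex_rr by (simp add: rr_def)

lemma rr_nondeg_eq: "nondeg C V \<Longrightarrow> rr C V = V"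
  unfolding nondeg_def rr_def by (simp add: filter_id_conv)

lemma alpha_nondeg_eq:
  assumes "nondeg C V"
  shows "alpha C V = [0..<Suc (dim V)]"
proof (rule nth_equalityI)
  fix i
  assume "i < length (alpha C V)"
  then have i: "i \<le> dim V" by simp
  have "filter (\<lambda>a. \<not> is_identity C a) (take i (snd V)) = take i (snd V)"
    using assms in_set_takeD by (fastforce simp: nondeg_def filter_id_conv)
  then show "alpha C V ! i = [0..<Suc (dim V)] ! i"
    using i by (simp add: alpha_nth nth_upt dim_def less_Suc_eq_le)
qed simp

lemma vert_rr_alpha:
  assumes "is_simplex C V" "j \<le> dim V"
  shows "vert C (rr C V) (alpha C V ! j) = vert C V j"
  using assms(2)
proof (induction j)
  case (Suc j)
  then have j: "j < dim V" by simp
  show ?case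
  proof (cases "is_identity C (snd V ! j)")
    case True
    then show ?thesis
      using alpha_Suc[OF j] Suc j is_identityD simplex_arr[OF assms(1) j] by auto
  next
    case False
    then show ?thesis using alpha_Suc[OF j] rr_nth_alpha[OF j] by simp
  qed
qed simp

lemma rr_simp_comp_alpha:
  assumes "is_simplex C V"
  shows "simp_comp C (rr C V) (alpha C V) = V"
proof (rule simplex_eqI)
  have r: "is_simplex C (rr C V)"
    using simplex_rr assms by blast
  show "is_simplex C (simp_comp C (rr C V) (alpha C V))"
    using simplex_simp_comp[OF r ord_map_alpha] .
  show dim: "dim (simp_comp C (rr C V) (alpha C V)) = dim V"
    using dim_simp_comp by simp
  fix j
  assume "j < dim (simp_comp C (rr C V) (alpha C V))"
  then have j: "j < dim V"
    using dim by simp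
  have a: "snd V ! j \<in> Arr C" "Dom C (snd V ! j) = vert C V j"
    using simplex_arr assms j by auto
  have "btw C (simp_comp C (rr C V) (alpha C V)) j (Suc j) =
      btw C (rr C V) (alpha C V ! j) (alpha C V ! Suc j)"
    using btw_simp_comp[OF r ord_map_alpha, of j "Suc j"] j by (simp del: btw.simps)
  also have "\<dots> = snd V ! j"
  proof (cases "is_identity C (snd V ! j)")
    case True
    then show ?thesis
      using alpha_Suc[OF j] btw_below[of "alpha C V ! j" "alpha C V ! j" "rr C V"]
        vert_rr_alpha[OF assms, of j] j is_identityD[OF True a(1)] a by simp
  next
    case False
    then have "alpha C V ! j < dim (rr C V)"
      using alpha_Suc[OF j] alpha_bound[of "Suc j" V C] j by simp
    with False show ?thesis
      using alpha_Suc[OF j] btw_Suc[OF r] rr_nth_alpha[OF j] by (simp del: btw.simps)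
  qed
  also have "\<dots> = btw C V j (Suc j)"
    using btw_Suc assms j by simp
  finally show "btw C (simp_comp C (rr C V) (alpha C V)) j (Suc j) = btw C V j (Suc j)" .
qed (simp_all add: fst_simp_comp assms)

lemma btw_rr_alpha:
  assumes "is_simplex C V" "u \<le> dim V" "v \<le> dim V"
  shows "btw C (rr C V) (alpha C V ! u) (alpha C V ! v) = btw C V u v"
  using btw_simp_comp[OF simplex_rr[OF assms(1)] ord_map_alpha, of u v]
    rr_simp_comp_alpha[OF assms(1)] assms by simp

end

fun alpha_section :: "('o, 'a) cat \<Rightarrow> 'a list \<Rightarrow> nat list" where
  "alpha_section C [] = [0]"
| "alpha_section C (a # as) =
    (if is_identity C a then map Suc (alpha_section C as) else 0 # map Suc (alpha_section C as))"

lemma alpha_Cons: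
  "alpha C (x, a # as) = 0 # map (\<lambda>n. if is_identity C a then n else Suc n) (alpha C (y, as))"
proof (rule nth_equalityI)
  fix i
  assume i: "i < length (alpha C (x, a # as))"
  show "alpha C (x, a # as) ! i = (0 # map (\<lambda>n. if is_identity C a then n else Suc n) (alpha C (y, as))) ! i"
  proof (cases i)
    case (Suc k)
    then show ?thesis using i by (simp add: alpha_nth dim_def)
  qed simp
qed (simp add: dim_def)

lemma is_rinv_alpha_section:
  "is_rinv (alpha_section C as) (alpha C (x, as)) (length (filter (\<lambda>a. \<not> is_identity C a) as)) (length as)"
proof (induction as arbitrary: x)
  case Nil
  then show ?case by (simp add: is_rinv_def ord_map_def map_comp_def alpha_def dim_def upt_Suc)
next
  case (Cons a as)
  let ?n = "\<lambda>as. length (filter (\<lambda>a. \<not> is_identity C a) as)"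
  have length: "length (alpha_section C as) = Suc (?n as)" for as
    by (induction as) auto
  have bound: "i \<in> set (alpha_section C as) \<Longrightarrow> i \<le> length as" for i as
    by (induction as arbitrary: i) (auto split: if_splits)
  have "sorted (alpha_section C as)" for as
    by (induction as) (auto simp: sorted_map)
  then have ord: "ord_map (alpha_section C (a # as)) (?n (a # as)) (length (a # as))"
    unfolding ord_map_def using length bound by metis
  have IH: "map_comp (alpha C (x, as)) (alpha_section C as) = [0..<Suc (?n as)]"
    using Cons.IH unfolding is_rinv_def by blast
  have "map_comp (alpha C (x, a # as)) (alpha_section C (a # as)) = [0..<Suc (?n (a # as))]"
  proof (cases "is_identity C a")
    case True
    then show ?thesis
      using IH unfolding alpha_Cons[of C x a as x] map_comp_def by (simp add: comp_def)
  next
    case False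
    have "\<forall>i\<in>set (alpha_section C as). i < length (alpha C (x, as))"
      using bound by (fastforce simp: dim_def)
    then have "map_comp (alpha C (x, a # as)) (alpha_section C (a # as)) =
        0 # map Suc (map_comp (alpha C (x, as)) (alpha_section C as))"
      using False unfolding alpha_Cons[of C x a as x] map_comp_def by simp
    also have "\<dots> = [0..<Suc (?n (a # as))]"
      using IH False by (simp add: map_Suc_upt upt_conv_Cons)
    finally show ?thesis .
  qed
  then show ?case
    using ord unfolding is_rinv_def by blast
qed

lemma ex_rinv_alpha: "\<exists>\<sigma>. is_rinv \<sigma> (alpha C V) (dim (rr C V)) (dim V)"
  using is_rinv_alpha_section[of C "snd V" "fst V"] by (auto simp: rr_def dim_def)

section \<open>Vertices joined by identities\<close>

text \<open>Since \<open>btw C V a b\<close> is an identity for \<open>b \<le> a\<close>, only the arrow from the smaller vertex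
  matters.\<close>

definition id_linked :: "('o, 'a) cat \<Rightarrow> ('o, 'a) simplex \<Rightarrow> nat \<Rightarrow> nat \<Rightarrow> bool" where
  "id_linked C V a b \<longleftrightarrow> is_identity C (btw C V a b) \<and> is_identity C (btw C V b a)"

lemma id_linked_sym: "id_linked C V a b \<Longrightarrow> id_linked C V b a"
  by (simp add: id_linked_def)

context category
begin

lemma id_linked_iff:
  "is_simplex C W \<Longrightarrow> a \<le> b \<Longrightarrow> b \<le> dim W \<Longrightarrow> id_linked C W a b \<longleftrightarrow> is_identity C (btw C W a b)"
  unfolding id_linked_def using btw_below simplex_vert_obj is_identity_Id by auto

lemma id_linked_refl: "is_simplex C W \<Longrightarrow> a \<le> dim W \<Longrightarrow> id_linked C W a a"
  using id_linked_iff by (simp add: btw_below is_identity_Id simplex_vert_obj)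

lemma identity_btwD:
  "is_simplex C W \<Longrightarrow> a \<le> b \<Longrightarrow> b \<le> dim W \<Longrightarrow> is_identity C (btw C W a b) \<Longrightarrow>
    btw C W a b = Id C (vert C W a) \<and> vert C W b = vert C W a"
  using btw_arr[of W a b] is_identityD by metis

lemma id_linked_two_of_three:
  assumes "is_simplex C W" "x \<le> y" "y \<le> z" "z \<le> dim W"
  shows "(id_linked C W x y \<and> id_linked C W y z \<longrightarrow> id_linked C W x z)
    \<and> (id_linked C W x y \<and> id_linked C W x z \<longrightarrow> id_linked C W y z)
    \<and> (id_linked C W x z \<and> id_linked C W y z \<longrightarrow> id_linked C W x y)"
proof -
  have xz: "btw C W x z = Comp C (btw C W y z) (btw C W x y)"
    using btw_trans assms by blast
  have g: "btw C W x y \<in> Arr C" "Cod C (btw C W x y) = vert C W y"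
    and h: "btw C W y z \<in> Arr C" "Dom C (btw C W y z) = vert C W y"
    using btw_arr assms by auto
  have "id_linked C W x y \<longleftrightarrow> is_identity C (btw C W x y)"
    and "id_linked C W y z \<longleftrightarrow> is_identity C (btw C W y z)"
    and "id_linked C W x z \<longleftrightarrow> is_identity C (btw C W x z)"
    using id_linked_iff assms by auto
  moreover have "is_identity C (btw C W x y) \<Longrightarrow>
      btw C W x y = Id C (vert C W x) \<and> vert C W y = vert C W x"
    and "is_identity C (btw C W y z) \<Longrightarrow>
      btw C W y z = Id C (vert C W y) \<and> vert C W z = vert C W y"
    using identity_btwD assms by auto
  ultimately show ?thesis
    using xz g h Comp_Id_left[of "btw C W x y"] Comp_Id_right[of "btw C W y z"] by auto
qed

lemma id_linked_trans:
  assumes W: "is_simplex C W" and "a \<le> dim W" "b \<le> dim W" "c \<le> dim W"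
    and "id_linked C W a b" "id_linked C W b c"
  shows "id_linked C W a c"
proof -
  consider "a \<le> b" "b \<le> c" | "a \<le> c" "c \<le> b" | "b \<le> a" "a \<le> c" | "b \<le> c" "c \<le> a"
    | "c \<le> a" "a \<le> b" | "c \<le> b" "b \<le> a"
    by linarith
  then show ?thesis
    using id_linked_two_of_three[OF W _ _ assms(2)] id_linked_two_of_three[OF W _ _ assms(3)]
      id_linked_two_of_three[OF W _ _ assms(4)] assms(5,6) id_linked_sym[of C W]
    by cases blast+
qed

lemma id_linked_simp_comp:
  "is_simplex C Y \<Longrightarrow> ord_map \<xi> p (dim Y) \<Longrightarrow> i \<le> p \<Longrightarrow> j \<le> p \<Longrightarrow>
    id_linked C (simp_comp C Y \<xi>) i j \<longleftrightarrow> id_linked C Y (\<xi> ! i) (\<xi> ! j)"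
  unfolding id_linked_def using btw_simp_comp by simp

lemma id_linked_if_alpha_eq:
  assumes "is_simplex C V" "u \<le> dim V" "v \<le> dim V" "alpha C V ! u = alpha C V ! v"
  shows "id_linked C V u v"
  using id_linked_refl[OF simplex_rr[OF assms(1)] alpha_bound[OF assms(2)]] assms
  unfolding id_linked_def by (metis btw_rr_alpha)

lemma id_linked_rr_alpha:
  "is_simplex C V \<Longrightarrow> u \<le> dim V \<Longrightarrow> v \<le> dim V \<Longrightarrow> id_linked C V u v \<Longrightarrow>
    id_linked C (rr C V) (alpha C V ! u) (alpha C V ! v)"
  unfolding id_linked_def using btw_rr_alpha by simp

end

declare dsim.trans [trans]

lemma src_dcomp [simp]: "src (dcomp n m) = src m"
  and tgt_dcomp [simp]: "tgt (dcomp n m) = tgt n"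
  and mapof_dcomp [simp]: "mapof (dcomp n m) = map_comp (mapof n) (mapof m)"
  by (simp_all add: dcomp_def src_def tgt_def mapof_def)

context category
begin

lemma is_dmor_iff:
  "is_dmor C (T, W, \<mu>) \<longleftrightarrow>
    is_simplex C T \<and> is_simplex C W \<and> ord_map \<mu> (dim T) (dim W) \<and> simp_comp C W \<mu> = T"
  by (simp add: is_dmor_def src_def tgt_def mapof_def)

lemma is_dmor_dcomp:
  assumes m: "is_dmor C m" and n: "is_dmor C n" and "src n = tgt m"
  shows "is_dmor C (dcomp n m)"
proof -
  have "simp_comp C (tgt n) (map_comp (mapof n) (mapof m)) =
      simp_comp C (simp_comp C (tgt n) (mapof n)) (mapof m)"
    using simp_comp_simp_comp[of "tgt n" "mapof n" "dim (src n)" "mapof m" "dim (src m)"]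
      m n assms(3) by (simp add: is_dmor_def)
  also have "\<dots> = src m"
    using m n assms(3) by (simp add: is_dmor_def)
  finally show ?thesis
    using m n assms(3) ord_map_comp[of "mapof n" "dim (src n)" "dim (tgt n)" "mapof m" "dim (src m)"]
    by (simp add: is_dmor_def dcomp_def src_def tgt_def mapof_def)
qed

lemma is_dmor_did: "is_simplex C X \<Longrightarrow> is_dmor C (did X)"
  by (simp add: is_dmor_def did_def src_def tgt_def mapof_def ord_map_id simp_comp_id)

lemma is_dmor_elem:
  assumes "is_simplex C X" "is_surj_deg s (dim X)" "is_rinv d s (dim X) (Suc (dim X))"
  shows "is_dmor C (X, simp_comp C X s, d)"
proof -
  have s: "ord_map s (Suc (dim X)) (dim X)"
    using assms(2) by (simp add: is_surj_deg_def)
  have d: "ord_map d (dim X) (Suc (dim X))" and "map_comp s d = [0..<Suc (dim X)]"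
    using assms(3) by (auto simp: is_rinv_def)
  then have "simp_comp C (simp_comp C X s) d = X"
    using simp_comp_simp_comp[OF assms(1) s d] simp_comp_id[OF assms(1)] by simp
  then show ?thesis
    using is_dmor_iff simplex_simp_comp[OF assms(1) s] assms(1) d
      dim_simp_comp[OF ord_map_length[OF s]] by simp
qed

lemma dsim_is_dmor:
  "dsim C m m' \<Longrightarrow> is_dmor C m \<and> is_dmor C m' \<and> src m = src m' \<and> tgt m = tgt m'"
proof (induction rule: dsim.induct)
  case (elem X s d d')
  then show ?case using is_dmor_elem by (simp add: src_def tgt_def)
next
  case (post m m' n)
  then show ?case
    using is_dmor_dcomp[of m n] is_dmor_dcomp[of m' n] by (simp add: dcomp_def src_def tgt_def)
next
  case (pre m m' n)
  then show ?case
    using is_dmor_dcomp[of n m] is_dmor_dcomp[of n m'] by (simp add: dcomp_def src_def tgt_def)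
qed simp_all

lemma id_linked_along_dmor:
  assumes "is_dmor C (T, W, \<mu>)" "i \<le> dim T" "j \<le> dim T" "id_linked C T i j"
  shows "id_linked C W (\<mu> ! i) (\<mu> ! j)"
proof -
  have "is_simplex C W" "ord_map \<mu> (dim T) (dim W)" "simp_comp C W \<mu> = T"
    using assms(1) is_dmor_iff by auto
  then show ?thesis
    using id_linked_simp_comp[of W \<mu> "dim T" i j] assms(2-4) by simp
qed

lemma simp_comp_cong:
  assumes "length \<mu> = length \<nu>" "vert C W (\<mu> ! 0) = vert C W (\<nu> ! 0)"
    and "\<And>i. Suc i < length \<mu> \<Longrightarrow> btw C W (\<mu> ! i) (\<mu> ! Suc i) = btw C W (\<nu> ! i) (\<nu> ! Suc i)"
  shows "simp_comp C W \<mu> = simp_comp C W \<nu>"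
proof -
  have "btw C W (\<mu> ! (j - 1)) (\<mu> ! j) = btw C W (\<nu> ! (j - 1)) (\<nu> ! j)"
    if "1 \<le> j" "j < length \<mu>" for j
    using assms(3)[of "j - 1"] that by simp
  then show ?thesis
    unfolding simp_comp_def using assms(1,2) by simp
qed

end

section \<open>Moving one vertex along an identity\<close>

definition degen :: "nat \<Rightarrow> nat \<Rightarrow> nat list" where
  "degen j k = map (\<lambda>i. if i \<le> j then i else i - 1) [0..<Suc (Suc k)]"

definition coface :: "nat \<Rightarrow> nat \<Rightarrow> nat list" where
  "coface j k = map (\<lambda>i. if i < j then i else Suc i) [0..<Suc k]"

definition switch_at :: "nat \<Rightarrow> nat list \<Rightarrow> nat list \<Rightarrow> nat list" where
  "switch_at j \<kappa> \<kappa>' = map (\<lambda>i. if i \<le> j then \<kappa> ! i else \<kappa>' ! (i - 1)) [0..<Suc (length \<kappa>)]"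

lemma degen_nth: "i \<le> Suc k \<Longrightarrow> degen j k ! i = (if i \<le> j then i else i - 1)"
  by (simp add: degen_def nth_upt less_Suc_eq_le)

lemma coface_nth: "i \<le> k \<Longrightarrow> coface j k ! i = (if i < j then i else Suc i)"
  by (simp add: coface_def nth_upt less_Suc_eq_le)

lemma switch_at_nth:
  "i \<le> length \<kappa> \<Longrightarrow> switch_at j \<kappa> \<kappa>' ! i = (if i \<le> j then \<kappa> ! i else \<kappa>' ! (i - 1))"
  by (simp add: switch_at_def nth_upt less_Suc_eq_le)

lemma is_surj_deg_degen:
  assumes "j \<le> k"
  shows "is_surj_deg (degen j k) k"
proof -
  have ord: "ord_map (degen j k) (Suc k) k"
    by (rule ord_mapI) (use assms in \<open>auto simp: degen_def degen_nth\<close>)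
  have "x \<in> set (degen j k)" if "x \<le> k" for x
  proof (cases "x \<le> j")
    case True
    then show ?thesis
      using that degen_nth[of x k j] ord_map_length[OF ord] by (metis le_SucI le_imp_less_Suc nth_mem)
  next
    case False
    then have "degen j k ! Suc x = x"
      using that degen_nth by simp
    then show ?thesis
      using nth_mem[of "Suc x" "degen j k"] ord_map_length[OF ord] that by simp
  qed
  then have "set (degen j k) = {0..k}"
    using ord unfolding ord_map_def by auto
  then show ?thesis
    using ord by (simp add: is_surj_deg_def)
qed

lemma is_rinv_coface:
  assumes "j' = j \<or> j' = Suc j"
  shows "is_rinv (coface j' k) (degen j k) k (Suc k)"
proof -
  have ord: "ord_map (coface j' k) k (Suc k)"
    by (rule ord_mapI) (auto simp: coface_def coface_nth)
  have "map_comp (degen j k) (coface j' k) = [0..<Suc k]"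
    using assms by (intro nth_equalityI)
      (auto simp: map_comp_nth ord_map_length[OF ord] coface_nth degen_nth less_Suc_eq_le)
  then show ?thesis
    using ord by (simp add: is_rinv_def)
qed

lemma ord_map_switch_at:
  assumes "ord_map \<kappa> k q" "ord_map \<kappa>' k q" "j \<le> k" "\<kappa> ! j \<le> \<kappa>' ! j"
  shows "ord_map (switch_at j \<kappa> \<kappa>') (Suc k) q"
proof (rule ord_mapI)
  have len: "length \<kappa> = Suc k"
    using ord_map_length[OF assms(1)] .
  show "length (switch_at j \<kappa> \<kappa>') = Suc (Suc k)"
    by (simp add: switch_at_def len)
  show "switch_at j \<kappa> \<kappa>' ! i \<le> q" if "i \<le> Suc k" for i
    using that switch_at_nth[of i \<kappa>] len ord_map_bound[OF assms(1)] ord_map_bound[OF assms(2)] assms(3)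
    by auto
  fix i i'
  assume ii: "i \<le> i'" "i' \<le> Suc k"
  consider "i' \<le> j" | "i \<le> j" "\<not> i' \<le> j" | "\<not> i \<le> j"
    by blast
  then show "switch_at j \<kappa> \<kappa>' ! i \<le> switch_at j \<kappa> \<kappa>' ! i'"
  proof cases
    case 1
    then show ?thesis using ii switch_at_nth len ord_map_mono[OF assms(1)] assms(3) by auto
  next
    case 2
    have "\<kappa> ! i \<le> \<kappa> ! j"
      using ord_map_mono[OF assms(1)] 2 assms(3) by blast
    also have "\<dots> \<le> \<kappa>' ! j"
      by (rule assms(4))
    also have "\<dots> \<le> \<kappa>' ! (i' - 1)"
      using ord_map_mono[OF assms(2), of j "i' - 1"] 2 ii by auto
    finally show ?thesis
      using 2 ii switch_at_nth len by auto
  next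
    case 3
    then show ?thesis using ii switch_at_nth len ord_map_mono[OF assms(2)] by auto
  qed
qed

lemma map_comp_switch_at_coface:
  assumes "length \<kappa> = Suc k" "length \<kappa>' = Suc k" "\<And>i. i \<le> k \<Longrightarrow> i \<noteq> j \<Longrightarrow> \<kappa> ! i = \<kappa>' ! i"
  shows "map_comp (switch_at j \<kappa> \<kappa>') (coface (Suc j) k) = \<kappa>"
    and "map_comp (switch_at j \<kappa> \<kappa>') (coface j k) = \<kappa>'"
  using assms
  by (auto intro!: nth_equalityI simp: map_comp_nth coface_def coface_nth switch_at_nth less_Suc_eq_le)

context category
begin

lemma simp_comp_switch_at:
  assumes W: "is_simplex C W" and \<kappa>: "ord_map \<kappa> k (dim W)" and \<kappa>': "ord_map \<kappa>' k (dim W)"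
    and j: "j \<le> k" and agree: "\<And>i. i \<le> k \<Longrightarrow> i \<noteq> j \<Longrightarrow> \<kappa> ! i = \<kappa>' ! i"
    and le: "\<kappa> ! j \<le> \<kappa>' ! j" and idn: "is_identity C (btw C W (\<kappa> ! j) (\<kappa>' ! j))"
  shows "simp_comp C W (switch_at j \<kappa> \<kappa>') = simp_comp C (simp_comp C W \<kappa>) (degen j k)"
proof -
  let ?l = "switch_at j \<kappa> \<kappa>'" and ?s = "degen j k"
  have len: "length \<kappa> = Suc k" "length ?s = Suc (Suc k)"
    using ord_map_length[OF \<kappa>] by (simp_all add: degen_def)
  have \<kappa>s: "map_comp \<kappa> ?s ! i = \<kappa> ! (?s ! i)" if "i \<le> Suc k" for i
    using map_comp_nth len(2) that by (simp add: less_Suc_eq_le)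
  have vj: "btw C W (\<kappa> ! j) (\<kappa>' ! j) = Id C (vert C W (\<kappa> ! j))"
    "vert C W (\<kappa>' ! j) = vert C W (\<kappa> ! j)"
    using identity_btwD[OF W le ord_map_bound[OF \<kappa>' j] idn] by auto
  have "simp_comp C W ?l = simp_comp C W (map_comp \<kappa> ?s)"
  proof (rule simp_comp_cong)
    show "length ?l = length (map_comp \<kappa> ?s)"
      using len by (simp add: switch_at_def)
    show "vert C W (?l ! 0) = vert C W (map_comp \<kappa> ?s ! 0)"
      using switch_at_nth[of 0 \<kappa>] \<kappa>s[of 0] degen_nth[of 0 k j] by simp
    fix i
    assume "Suc i < length ?l"
    then have i: "i \<le> k"
      using len by (simp add: switch_at_def)
    consider "Suc i \<le> j" | "i = j" | "i = Suc j" | "Suc j < i"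
      by linarith
    then show "btw C W (?l ! i) (?l ! Suc i) = btw C W (map_comp \<kappa> ?s ! i) (map_comp \<kappa> ?s ! Suc i)"
    proof cases
      case 3
      have c: "\<kappa>' ! j \<le> \<kappa>' ! Suc j" "\<kappa>' ! Suc j \<le> dim W"
        using ord_map_mono[OF \<kappa>'] ord_map_bound[OF \<kappa>'] 3 i by auto
      have "btw C W (\<kappa> ! j) (\<kappa>' ! Suc j) = btw C W (\<kappa>' ! j) (\<kappa>' ! Suc j)"
        using btw_trans[OF W le c] vj btw_arr[OF W c] Comp_Id_right by metis
      then show ?thesis
        using 3 i switch_at_nth len \<kappa>s degen_nth agree[of "Suc j"] by simp
    qed (use i switch_at_nth len \<kappa>s degen_nth agree vj btw_below in \<open>simp_all\<close>)
  qed
  also have "\<dots> = simp_comp C (simp_comp C W \<kappa>) ?s"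
    using simp_comp_simp_comp[OF W \<kappa>] is_surj_deg_degen[OF j] unfolding is_surj_deg_def by auto
  finally show ?thesis .
qed

text \<open>\<open>\<kappa>\<^sub>*\<close> and \<open>\<kappa>'\<^sub>*\<close> are the composites of \<open>(switch_at j \<kappa> \<kappa>')\<^sub>*\<close> with the elementary
  equivalent pair \<open>(coface (j+1) k)\<^sub>*\<close>, \<open>(coface j k)\<^sub>*\<close>.\<close>

lemma dsim_change_one:
  assumes W: "is_simplex C W" and \<kappa>: "ord_map \<kappa> k (dim W)" and \<kappa>': "ord_map \<kappa>' k (dim W)"
    and j: "j \<le> k" and agree: "\<And>i. i \<le> k \<Longrightarrow> i \<noteq> j \<Longrightarrow> \<kappa> ! i = \<kappa>' ! i"
    and le: "\<kappa> ! j \<le> \<kappa>' ! j" and idn: "is_identity C (btw C W (\<kappa> ! j) (\<kappa>' ! j))"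
  shows "dsim C (simp_comp C W \<kappa>, W, \<kappa>) (simp_comp C W \<kappa>, W, \<kappa>')"
proof -
  define T where "T = simp_comp C W \<kappa>"
  let ?l = "switch_at j \<kappa> \<kappa>'" and ?s = "degen j k"
  have T: "is_simplex C T" "dim T = k"
    using simplex_simp_comp[OF W \<kappa>] dim_simp_comp[OF ord_map_length[OF \<kappa>]] T_def by auto
  have elem: "dsim C (T, simp_comp C T ?s, coface (Suc j) k) (T, simp_comp C T ?s, coface j k)"
    using dsim.elem[OF T(1)] T(2) is_surj_deg_degen[OF j] is_rinv_coface by simp
  have s: "ord_map ?s (Suc k) k"
    using is_surj_deg_degen[OF j] by (simp add: is_surj_deg_def)
  have "is_dmor C (simp_comp C T ?s, W, ?l)"
    using is_dmor_iff simplex_simp_comp[OF T(1)] s T W ord_map_switch_at[OF \<kappa> \<kappa>' j le]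
      dim_simp_comp[OF ord_map_length[OF s]] simp_comp_switch_at[OF assms] T_def by simp
  from dsim.post[OF elem this] show ?thesis
    using map_comp_switch_at_coface[OF ord_map_length[OF \<kappa>] ord_map_length[OF \<kappa>'] agree] T_def
    by (simp add: dcomp_def src_def tgt_def mapof_def)
qed


lemma dsim_raise:
  assumes W: "is_simplex C W" and \<mu>: "ord_map \<mu> k (dim W)" and \<nu>: "ord_map \<nu> k (dim W)"
    and up: "\<And>i. i \<le> k \<Longrightarrow> \<mu> ! i \<le> \<nu> ! i \<and> is_identity C (btw C W (\<mu> ! i) (\<nu> ! i))"
  shows "dsim C (simp_comp C W \<mu>, W, \<mu>) (simp_comp C W \<mu>, W, \<nu>)"
proof -
  define T where "T = simp_comp C W \<mu>"
  define \<kappa> where "\<kappa> n = map (\<lambda>i. if i < n then \<mu> ! i else \<nu> ! i) [0..<Suc k]" for n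
  have \<kappa>_nth: "i \<le> k \<Longrightarrow> \<kappa> n ! i = (if i < n then \<mu> ! i else \<nu> ! i)" for n i
    by (simp add: \<kappa>_def nth_upt less_Suc_eq_le)
  have \<kappa>: "ord_map (\<kappa> n) k (dim W)" for n
  proof (rule ord_mapI)
    fix i i'
    assume ii: "i \<le> i'" "i' \<le> k"
    have "\<mu> ! i \<le> \<nu> ! i'"
      using up[of i] ord_map_mono[OF \<nu> ii] ii by simp
    then show "\<kappa> n ! i \<le> \<kappa> n ! i'"
      using ii \<kappa>_nth ord_map_mono[OF \<mu> ii] ord_map_mono[OF \<nu> ii] by auto
  qed (auto simp: \<kappa>_def \<kappa>_nth ord_map_bound[OF \<mu>] ord_map_bound[OF \<nu>])
  have \<kappa>_ends: "\<kappa> (Suc k) = \<mu>" "\<kappa> 0 = \<nu>"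
    by (auto intro!: nth_equalityI simp: ord_map_length[OF \<mu>] ord_map_length[OF \<nu>]
        \<kappa>_def \<kappa>_nth less_Suc_eq_le)
  have "dsim C (T, W, \<mu>) (T, W, \<kappa> n)" if "n \<le> Suc k" for n
    using that
  proof (induction n rule: inc_induct)
    case base
    have "is_dmor C (T, W, \<mu>)"
      using is_dmor_iff simplex_simp_comp[OF W \<mu>] W \<mu> dim_simp_comp[OF ord_map_length[OF \<mu>]] T_def
      by simp
    then show ?case
      using dsim.refl \<kappa>_ends by simp
  next
    case (step n)
    then have "simp_comp C W (\<kappa> (Suc n)) = T"
      using dsim_is_dmor is_dmor_iff by blast
    moreover have "dsim C (simp_comp C W (\<kappa> (Suc n)), W, \<kappa> (Suc n)) (simp_comp C W (\<kappa> (Suc n)), W, \<kappa> n)"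
      using step(2) by (intro dsim_change_one[OF W \<kappa> \<kappa>, of n]) (auto simp: \<kappa>_nth up)
    ultimately show ?case
      using step.IH dsim.trans by metis
  qed
  then show ?thesis
    using \<kappa>_ends T_def by (metis le_refl zero_le)
qed

lemma identity_btw_max:
  assumes "is_simplex C W" "a \<le> dim W" "b \<le> dim W" "id_linked C W a b"
  shows "is_identity C (btw C W a (max a b))"
proof (cases "a \<le> b")
  case True
  then show ?thesis using assms id_linked_iff by (simp add: max_def)
next
  case False
  then show ?thesis using assms id_linked_refl id_linked_iff by (simp add: max_def)
qed

text \<open>Both morphisms are equivalent to the one given by the pointwise maximum of \<open>\<mu>\<close> and \<open>\<mu>'\<close>.\<close>

lemma dsim_if_id_linked:
  assumes m: "is_dmor C (T, W, \<mu>)" and m': "is_dmor C (T, W, \<mu>')"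
    and linked: "\<And>i. i \<le> dim T \<Longrightarrow> id_linked C W (\<mu> ! i) (\<mu>' ! i)"
  shows "dsim C (T, W, \<mu>) (T, W, \<mu>')"
proof -
  have W: "is_simplex C W" and \<mu>: "ord_map \<mu> (dim T) (dim W)" "simp_comp C W \<mu> = T"
    and \<mu>': "ord_map \<mu>' (dim T) (dim W)" "simp_comp C W \<mu>' = T"
    using m m' is_dmor_iff by auto
  define \<nu> where "\<nu> = map (\<lambda>i. max (\<mu> ! i) (\<mu>' ! i)) [0..<Suc (dim T)]"
  have \<nu>_nth: "i \<le> dim T \<Longrightarrow> \<nu> ! i = max (\<mu> ! i) (\<mu>' ! i)" for i
    by (simp add: \<nu>_def nth_upt less_Suc_eq_le)
  have \<nu>: "ord_map \<nu> (dim T) (dim W)"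
  proof (rule ord_mapI)
    fix i j
    assume ij: "i \<le> j" "j \<le> dim T"
    then show "\<nu> ! i \<le> \<nu> ! j"
      using max.mono[OF ord_map_mono[OF \<mu>(1) ij] ord_map_mono[OF \<mu>'(1) ij]] \<nu>_nth by simp
  qed (simp_all add: \<nu>_def \<nu>_nth ord_map_bound[OF \<mu>(1)] ord_map_bound[OF \<mu>'(1)])
  have up: "\<mu> ! i \<le> \<nu> ! i \<and> is_identity C (btw C W (\<mu> ! i) (\<nu> ! i))"
    and up': "\<mu>' ! i \<le> \<nu> ! i \<and> is_identity C (btw C W (\<mu>' ! i) (\<nu> ! i))" if i: "i \<le> dim T" for i
    using identity_btw_max[OF W, of "\<mu> ! i" "\<mu>' ! i"] identity_btw_max[OF W, of "\<mu>' ! i" "\<mu> ! i"]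
      linked[OF i] id_linked_sym[OF linked[OF i]] ord_map_bound[OF \<mu>(1) i] ord_map_bound[OF \<mu>'(1) i]
    by (simp_all add: \<nu>_nth[OF i] max.commute)
  have dim: "dim T = dim (simp_comp C W \<mu>)"
    using \<mu>(2) dim_simp_comp[OF ord_map_length[OF \<mu>(1)]] by simp
  have "dsim C (T, W, \<mu>) (T, W, \<nu>)" and "dsim C (T, W, \<mu>') (T, W, \<nu>)"
    using dsim_raise[OF W \<mu>(1) \<nu> up] dsim_raise[OF W \<mu>'(1) \<nu> up'] \<mu>(2) \<mu>'(2)
    unfolding dim by simp_all
  then show ?thesis
    by (rule dsim.trans[OF _ dsim.sym])
qed

end

section \<open>The action of \<open>Sd(f)\<close> on representatives\<close>

context cat_functor
begin

lemma Sd_mor_eq: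
  "Sd_mor D F m \<sigma> = (rr D (fsimp F (src m)), rr D (fsimp F (tgt m)),
     map_comp (alpha D (fsimp F (tgt m))) (map_comp (mapof m) \<sigma>))"
  by (simp add: Sd_mor_def Sd_obj_def)

lemma src_Sd_mor [simp]: "src (Sd_mor D F m \<sigma>) = Sd_obj D F (src m)"
  and tgt_Sd_mor [simp]: "tgt (Sd_mor D F m \<sigma>) = Sd_obj D F (tgt m)"
  by (simp_all add: Sd_mor_def src_def tgt_def)

lemma is_dmor_fsimp:
  assumes "is_dmor C m"
  shows "is_dmor D (fsimp F (src m), fsimp F (tgt m), mapof m)"
proof -
  have "is_simplex C (src m)" "is_simplex C (tgt m)" "ord_map (mapof m) (dim (src m)) (dim (tgt m))"
    "simp_comp C (tgt m) (mapof m) = src m"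
    using assms by (auto simp: is_dmor_def)
  then show ?thesis
    unfolding D.is_dmor_iff
    using simplex_fsimp fsimp_simp_comp[of "tgt m" "mapof m" "dim (src m)", symmetric] by simp
qed

lemma sd_choiceD:
  assumes "sd_choice D F X \<sigma>"
  shows "ord_map \<sigma> (dim (rr D (fsimp F X))) (dim X)"
    and "i \<le> dim (rr D (fsimp F X)) \<Longrightarrow> alpha D (fsimp F X) ! (\<sigma> ! i) = i"
    and "i \<le> dim (rr D (fsimp F X)) \<Longrightarrow> \<sigma> ! i \<le> dim X"
  using assms is_rinv_nth ord_map_bound unfolding sd_choice_def Sd_obj_def is_rinv_def
  by (auto simp: is_rinv_def)

lemma ex_sd_choice: "\<exists>\<sigma>. sd_choice D F X \<sigma>"
  using ex_rinv_alpha[of D "fsimp F X"] unfolding sd_choice_def Sd_obj_def by simp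

lemma is_dmor_Sd_mor:
  assumes m: "is_dmor C m" and \<sigma>: "sd_choice D F (src m) \<sigma>"
  shows "is_dmor D (Sd_mor D F m \<sigma>)"
proof -
  let ?X = "fsimp F (src m)" and ?Y = "fsimp F (tgt m)" and ?\<xi> = "mapof m"
  let ?p = "dim (rr D ?X)"
  have X: "is_simplex D ?X" and Y: "is_simplex D ?Y"
    and \<xi>: "ord_map ?\<xi> (dim ?X) (dim ?Y)" and Y\<xi>: "simp_comp D ?Y ?\<xi> = ?X"
    using is_dmor_fsimp[OF m] unfolding D.is_dmor_iff by auto
  have \<sigma>_ord: "ord_map \<sigma> ?p (dim ?X)" and \<alpha>\<sigma>: "map_comp (alpha D ?X) \<sigma> = [0..<Suc ?p]"
    using \<sigma> unfolding sd_choice_def Sd_obj_def is_rinv_def by auto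
  have rX: "is_simplex D (rr D ?X)" and rY: "is_simplex D (rr D ?Y)"
    using D.simplex_rr X Y by auto
  have \<xi>\<sigma>: "ord_map (map_comp ?\<xi> \<sigma>) ?p (dim ?Y)"
    using ord_map_comp[OF \<xi> \<sigma>_ord] .
  have "simp_comp D (rr D ?Y) (map_comp (alpha D ?Y) (map_comp ?\<xi> \<sigma>))
      = simp_comp D (simp_comp D (rr D ?Y) (alpha D ?Y)) (map_comp ?\<xi> \<sigma>)"
    using D.simp_comp_simp_comp[OF rY ord_map_alpha \<xi>\<sigma>] by simp
  also have "\<dots> = simp_comp D (simp_comp D ?Y ?\<xi>) \<sigma>"
    using D.rr_simp_comp_alpha[OF Y] D.simp_comp_simp_comp[OF Y \<xi> \<sigma>_ord] by simp
  also have "\<dots> = simp_comp D (simp_comp D (rr D ?X) (alpha D ?X)) \<sigma>"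
    using D.rr_simp_comp_alpha[OF X] Y\<xi> by simp
  also have "\<dots> = rr D ?X"
    using D.simp_comp_simp_comp[OF rX ord_map_alpha \<sigma>_ord] \<alpha>\<sigma> D.simp_comp_id[OF rX] by simp
  finally show ?thesis
    unfolding Sd_mor_eq using D.is_dmor_iff rX rY ord_map_comp[OF ord_map_alpha \<xi>\<sigma>] by simp
qed

lemma Sd_mor_nth:
  assumes m: "is_dmor C m" and \<sigma>: "sd_choice D F (src m) \<sigma>" and i: "i \<le> dim (Sd_obj D F (src m))"
  shows "mapof (Sd_mor D F m \<sigma>) ! i = alpha D (fsimp F (tgt m)) ! (mapof m ! (\<sigma> ! i))"
proof -
  have "ord_map (mapof m) (dim (src m)) (dim (tgt m))"
    using m by (auto simp: is_dmor_def)
  then show ?thesis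
    unfolding Sd_mor_eq mapof_def
    using map_comp_nth ord_map_length ord_map_length[OF sd_choiceD(1)[OF \<sigma>]] sd_choiceD(3)[OF \<sigma>] i
    by (simp add: Sd_obj_def less_Suc_eq_le)
qed

lemma dsim_Sd_mor_if_id_linked:
  assumes m: "is_dmor C m" and m': "is_dmor C m'" and "src m' = src m" "tgt m' = tgt m"
    and \<sigma>: "sd_choice D F (src m) \<sigma>" and \<sigma>': "sd_choice D F (src m) \<sigma>'"
    and linked: "\<And>i. i \<le> dim (Sd_obj D F (src m)) \<Longrightarrow>
      id_linked D (fsimp F (tgt m)) (mapof m ! (\<sigma> ! i)) (mapof m' ! (\<sigma>' ! i))"
  shows "dsim D (Sd_mor D F m \<sigma>) (Sd_mor D F m' \<sigma>')"
proof -
  have Y: "is_simplex D (fsimp F (tgt m))"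
    using m simplex_fsimp by (simp add: is_dmor_def)
  have \<xi>: "ord_map (mapof m) (dim (src m)) (dim (tgt m))"
    and \<xi>': "ord_map (mapof m') (dim (src m)) (dim (tgt m))"
    using m m' assms(3,4) by (auto simp: is_dmor_def)
  have "Sd_mor D F m \<sigma> = (Sd_obj D F (src m), Sd_obj D F (tgt m), mapof (Sd_mor D F m \<sigma>))"
    and "Sd_mor D F m' \<sigma>' = (Sd_obj D F (src m), Sd_obj D F (tgt m), mapof (Sd_mor D F m' \<sigma>'))"
    using assms(3,4) by (simp_all add: Sd_mor_def mapof_def)
  moreover have "is_dmor D (Sd_mor D F m \<sigma>)" "is_dmor D (Sd_mor D F m' \<sigma>')"
    using is_dmor_Sd_mor m m' \<sigma> \<sigma>' assms(3) by auto
  moreover have "id_linked D (Sd_obj D F (tgt m))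
      (mapof (Sd_mor D F m \<sigma>) ! i) (mapof (Sd_mor D F m' \<sigma>') ! i)"
    if i: "i \<le> dim (Sd_obj D F (src m))" for i
  proof -
    have "mapof m ! (\<sigma> ! i) \<le> dim (fsimp F (tgt m))" "mapof m' ! (\<sigma>' ! i) \<le> dim (fsimp F (tgt m))"
      using ord_map_bound[OF \<xi>] ord_map_bound[OF \<xi>'] sd_choiceD(3)[OF \<sigma>] sd_choiceD(3)[OF \<sigma>'] i
      unfolding Sd_obj_def by simp_all
    from D.id_linked_rr_alpha[OF Y this linked[OF i]] show ?thesis
      using Sd_mor_nth[OF m \<sigma> i] Sd_mor_nth[of m' \<sigma>' i] m' \<sigma>' i assms(3,4)
      unfolding Sd_obj_def by simp
  qed
  ultimately show ?thesis
    using D.dsim_if_id_linked by metis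
qed

lemma id_linked_sd_choice:
  assumes X: "is_simplex C X" and \<sigma>: "sd_choice D F X \<sigma>" and \<rho>: "sd_choice D F X \<rho>"
    and i: "i \<le> dim (Sd_obj D F X)"
  shows "id_linked D (fsimp F X) (\<sigma> ! i) (\<rho> ! i)"
  using D.id_linked_if_alpha_eq[OF simplex_fsimp[OF X]] sd_choiceD[OF \<sigma>] sd_choiceD[OF \<rho>] i
  by (simp add: Sd_obj_def)

lemma dsim_Sd_mor_if_maps_id_linked:
  assumes m: "is_dmor C m" and m': "is_dmor C m'" and "src m' = src m" "tgt m' = tgt m"
    and \<sigma>: "sd_choice D F (src m) \<sigma>" and \<sigma>': "sd_choice D F (src m) \<sigma>'"
    and linked: "\<And>x. x \<le> dim (src m) \<Longrightarrow>
      id_linked D (fsimp F (tgt m)) (mapof m ! x) (mapof m' ! x)"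
  shows "dsim D (Sd_mor D F m \<sigma>) (Sd_mor D F m' \<sigma>')"
proof (rule dsim_Sd_mor_if_id_linked[OF assms(1-6)])
  fix i
  assume i: "i \<le> dim (Sd_obj D F (src m))"
  have fm: "is_dmor D (fsimp F (src m), fsimp F (tgt m), mapof m)"
    using is_dmor_fsimp[OF m] .
  then have Y: "is_simplex D (fsimp F (tgt m))"
    and \<xi>: "ord_map (mapof m) (dim (fsimp F (src m))) (dim (fsimp F (tgt m)))"
    unfolding D.is_dmor_iff by auto
  have \<sigma>i: "\<sigma> ! i \<le> dim (fsimp F (src m))" "\<sigma>' ! i \<le> dim (fsimp F (src m))"
    using sd_choiceD(3) \<sigma> \<sigma>' i by (auto simp: Sd_obj_def)
  have "id_linked D (fsimp F (tgt m)) (mapof m ! (\<sigma> ! i)) (mapof m ! (\<sigma>' ! i))"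
    using D.id_linked_along_dmor[OF fm \<sigma>i] id_linked_sd_choice[OF _ \<sigma> \<sigma>' i] m
    by (simp add: is_dmor_def)
  moreover have "ord_map (mapof m') (dim (fsimp F (src m))) (dim (fsimp F (tgt m)))"
    using is_dmor_fsimp[OF m'] assms(3,4) unfolding D.is_dmor_iff by simp
  ultimately show "id_linked D (fsimp F (tgt m)) (mapof m ! (\<sigma> ! i)) (mapof m' ! (\<sigma>' ! i))"
    using D.id_linked_trans[OF Y _ _ _ _ linked] ord_map_bound[OF \<xi>] \<sigma>i ord_map_bound by simp
qed

lemma id_linked_dcomp_vertex:
  assumes m: "is_dmor C m" and nm: "src n = tgt m"
    and \<sigma>: "sd_choice D F (src m) \<sigma>" and \<tau>: "sd_choice D F (src n) \<tau>"
    and \<rho>: "sd_choice D F (src m) \<rho>" and i: "i \<le> dim (Sd_obj D F (src m))"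
  shows "id_linked D (fsimp F (tgt m))
    (mapof m ! (\<rho> ! i)) (\<tau> ! (alpha D (fsimp F (tgt m)) ! (mapof m ! (\<sigma> ! i))))"
proof -
  let ?fX = "fsimp F (src m)" and ?fY = "fsimp F (tgt m)" and ?\<alpha>Y = "alpha D (fsimp F (tgt m))"
  define y where "y = mapof m ! (\<rho> ! i)"
  define w where "w = mapof m ! (\<sigma> ! i)"
  define y' where "y' = \<tau> ! (?\<alpha>Y ! w)"
  have fm: "is_dmor D (?fX, ?fY, mapof m)"
    using is_dmor_fsimp[OF m] by simp
  then have fY: "is_simplex D ?fY" and \<xi>: "ord_map (mapof m) (dim ?fX) (dim ?fY)"
    unfolding D.is_dmor_iff by auto
  have \<rho>\<sigma>i: "\<rho> ! i \<le> dim ?fX" "\<sigma> ! i \<le> dim ?fX"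
    using sd_choiceD(3) \<rho> \<sigma> i by (auto simp: Sd_obj_def)
  have yw: "y \<le> dim ?fY" "w \<le> dim ?fY"
    using ord_map_bound[OF \<xi>] \<rho>\<sigma>i y_def w_def by auto
  have "?\<alpha>Y ! w \<le> dim (Sd_obj D F (src n))"
    using alpha_bound[OF yw(2)] nm by (simp add: Sd_obj_def)
  then have y': "y' \<le> dim ?fY" "?\<alpha>Y ! y' = ?\<alpha>Y ! w"
    using sd_choiceD(2,3)[OF \<tau>] nm y'_def by (simp_all add: Sd_obj_def)
  have "id_linked D ?fY y w"
    using D.id_linked_along_dmor[OF fm \<rho>\<sigma>i] id_linked_sd_choice[OF _ \<rho> \<sigma> i] m y_def w_def
    by (simp add: is_dmor_def)
  moreover have "id_linked D ?fY w y'"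
    using D.id_linked_if_alpha_eq[OF fY yw(2) y'(1)] y'(2) by simp
  ultimately show ?thesis
    using D.id_linked_trans[OF fY yw y'(1)] y_def w_def y'_def by blast
qed

lemma Sd_mor_dcomp:
  assumes m: "is_dmor C m" and n: "is_dmor C n" and nm: "src n = tgt m"
    and \<sigma>: "sd_choice D F (src m) \<sigma>" and \<tau>: "sd_choice D F (src n) \<tau>"
    and \<rho>: "sd_choice D F (src m) \<rho>"
  shows "dsim D (Sd_mor D F (dcomp n m) \<rho>) (dcomp (Sd_mor D F n \<tau>) (Sd_mor D F m \<sigma>))"
proof -
  let ?fY = "fsimp F (tgt m)" and ?fZ = "fsimp F (tgt n)"
  let ?\<xi> = "mapof m" and ?\<eta> = "mapof n" and ?\<alpha>Y = "alpha D ?fY" and ?\<alpha>Z = "alpha D ?fZ"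
  have nm_dmor: "is_dmor C (dcomp n m)"
    using C.is_dmor_dcomp m n nm by blast
  have fn: "is_dmor D (?fY, ?fZ, ?\<eta>)"
    using is_dmor_fsimp[OF n] nm by simp
  then have fZ: "is_simplex D ?fZ" and \<eta>: "ord_map ?\<eta> (dim ?fY) (dim ?fZ)"
    unfolding D.is_dmor_iff by auto
  have \<xi>: "ord_map ?\<xi> (dim (src m)) (dim (tgt m))"
    using m by (simp add: is_dmor_def)
  have "is_dmor D (Sd_mor D F (dcomp n m) \<rho>)"
    using is_dmor_Sd_mor[OF nm_dmor] \<rho> by simp
  moreover have "is_dmor D (dcomp (Sd_mor D F n \<tau>) (Sd_mor D F m \<sigma>))"
    using D.is_dmor_dcomp is_dmor_Sd_mor m n \<sigma> \<tau> nm by simp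
  moreover have "id_linked D (Sd_obj D F (tgt n))
      (mapof (Sd_mor D F (dcomp n m) \<rho>) ! i) (mapof (dcomp (Sd_mor D F n \<tau>) (Sd_mor D F m \<sigma>)) ! i)"
    if i: "i \<le> dim (Sd_obj D F (src m))" for i
  proof -
    let ?y = "?\<xi> ! (\<rho> ! i)" and ?y' = "\<tau> ! (?\<alpha>Y ! (?\<xi> ! (\<sigma> ! i)))"
    have \<rho>i: "\<rho> ! i \<le> dim (src m)" and "\<sigma> ! i \<le> dim (src m)"
      using sd_choiceD(3)[OF \<rho>] sd_choiceD(3)[OF \<sigma>] i by (auto simp: Sd_obj_def)
    then have \<alpha>w: "?\<alpha>Y ! (?\<xi> ! (\<sigma> ! i)) \<le> dim (Sd_obj D F (src n))"
      using ord_map_bound[OF \<xi>] alpha_bound[of _ ?fY D] nm by (simp add: Sd_obj_def)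
    have "?y \<le> dim ?fY" "?y' \<le> dim ?fY"
      using ord_map_bound[OF \<xi> \<rho>i] sd_choiceD(3)[OF \<tau>] \<alpha>w nm by (simp_all add: Sd_obj_def)
    then have "id_linked D (rr D ?fZ) (?\<alpha>Z ! (?\<eta> ! ?y)) (?\<alpha>Z ! (?\<eta> ! ?y'))"
      using D.id_linked_rr_alpha[OF fZ] D.id_linked_along_dmor[OF fn]
        id_linked_dcomp_vertex[OF m nm \<sigma> \<tau> \<rho> i] ord_map_bound[OF \<eta>] by simp
    moreover have "mapof (Sd_mor D F (dcomp n m) \<rho>) ! i = ?\<alpha>Z ! (?\<eta> ! ?y)"
      using Sd_mor_nth[OF nm_dmor, of \<rho> i] \<rho> i map_comp_nth[of "\<rho> ! i" ?\<xi> ?\<eta>]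
        ord_map_length[OF \<xi>] \<rho>i by (simp add: less_Suc_eq_le)
    moreover have "mapof (dcomp (Sd_mor D F n \<tau>) (Sd_mor D F m \<sigma>)) ! i = ?\<alpha>Z ! (?\<eta> ! ?y')"
      using map_comp_nth[of i "mapof (Sd_mor D F m \<sigma>)" "mapof (Sd_mor D F n \<tau>)"]
        ord_map_length[OF sd_choiceD(1)[OF \<sigma>]] i Sd_mor_nth[OF m \<sigma> i] Sd_mor_nth[OF n \<tau> \<alpha>w]
      by (simp add: dcomp_def mapof_def Sd_mor_def Sd_obj_def less_Suc_eq_le)
    ultimately show ?thesis
      by (simp add: Sd_obj_def)
  qed
  moreover have "Sd_mor D F (dcomp n m) \<rho> =
      (Sd_obj D F (src m), Sd_obj D F (tgt n), mapof (Sd_mor D F (dcomp n m) \<rho>))"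
    and "dcomp (Sd_mor D F n \<tau>) (Sd_mor D F m \<sigma>) =
      (Sd_obj D F (src m), Sd_obj D F (tgt n), mapof (dcomp (Sd_mor D F n \<tau>) (Sd_mor D F m \<sigma>)))"
    by (simp_all add: Sd_mor_def dcomp_def src_def tgt_def mapof_def)
  ultimately show ?thesis
    using D.dsim_if_id_linked by metis
qed

lemma dsim_Sd_mor_dcomp:
  assumes \<sigma>\<sigma>': "dsim D (Sd_mor D F m \<sigma>) (Sd_mor D F m' \<sigma>')"
    and \<tau>\<tau>': "dsim D (Sd_mor D F n \<tau>) (Sd_mor D F n' \<tau>')"
    and dmor: "is_dmor C m" "is_dmor C m'" "is_dmor C n" "is_dmor C n'"
    and comp: "src n = tgt m" "src n' = tgt m'"
    and choice: "sd_choice D F (src m) \<sigma>" "sd_choice D F (src m') \<sigma>'"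
      "sd_choice D F (src n) \<tau>" "sd_choice D F (src n') \<tau>'"
      "sd_choice D F (src m) \<rho>" "sd_choice D F (src m') \<rho>'"
  shows "dsim D (Sd_mor D F (dcomp n m) \<rho>) (Sd_mor D F (dcomp n' m') \<rho>')"
proof -
  have tgt_eq: "Sd_obj D F (tgt m') = Sd_obj D F (tgt m)"
    using D.dsim_is_dmor[OF \<sigma>\<sigma>'] by simp
  have "dsim D (Sd_mor D F (dcomp n m) \<rho>) (dcomp (Sd_mor D F n \<tau>) (Sd_mor D F m \<sigma>))"
    using Sd_mor_dcomp[OF dmor(1,3) comp(1) choice(1,3,5)] .
  also have "dsim D \<dots> (dcomp (Sd_mor D F n \<tau>) (Sd_mor D F m' \<sigma>'))"
    using dsim.post[OF \<sigma>\<sigma>' is_dmor_Sd_mor[OF dmor(3) choice(3)]] comp by simp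
  also have "dsim D \<dots> (dcomp (Sd_mor D F n' \<tau>') (Sd_mor D F m' \<sigma>'))"
    using dsim.pre[OF \<tau>\<tau>' is_dmor_Sd_mor[OF dmor(2) choice(2)]] comp tgt_eq by simp
  also have "dsim D \<dots> (Sd_mor D F (dcomp n' m') \<rho>')"
    using dsim.sym[OF Sd_mor_dcomp[OF dmor(2,4) comp(2) choice(2,4,6)]] .
  finally show ?thesis .
qed

lemma dsim_Sd_mor_elem:
  assumes X: "is_simplex C X" and s: "is_surj_deg s (dim X)"
    and d: "is_rinv d s (dim X) (Suc (dim X))" and d': "is_rinv d' s (dim X) (Suc (dim X))"
    and \<sigma>: "sd_choice D F X \<sigma>" and \<sigma>': "sd_choice D F X \<sigma>'"
  shows "dsim D (Sd_mor D F (X, simp_comp C X s, d) \<sigma>) (Sd_mor D F (X, simp_comp C X s, d') \<sigma>')"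
proof (rule dsim_Sd_mor_if_maps_id_linked)
  have s_ord: "ord_map s (Suc (dim X)) (dim X)"
    using s by (simp add: is_surj_deg_def)
  have d_ord: "ord_map d (dim X) (Suc (dim X))" "ord_map d' (dim X) (Suc (dim X))"
    using d d' by (simp_all add: is_rinv_def)
  have fX: "is_simplex D (fsimp F X)"
    using simplex_fsimp X by blast
  fix x
  assume "x \<le> dim (src (X, simp_comp C X s, d))"
  then have x: "x \<le> dim X"
    by (simp add: src_def)
  have "id_linked D (simp_comp D (fsimp F X) s) (d ! x) (d' ! x)"
    using D.id_linked_simp_comp[OF fX, of s "Suc (dim X)"] s_ord ord_map_bound[OF d_ord(1) x]
      ord_map_bound[OF d_ord(2) x] is_rinv_nth[OF d x] is_rinv_nth[OF d' x] D.id_linked_refl[OF fX] x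
    by simp
  then show "id_linked D (fsimp F (tgt (X, simp_comp C X s, d)))
      (mapof (X, simp_comp C X s, d) ! x) (mapof (X, simp_comp C X s, d') ! x)"
    using fsimp_simp_comp[OF X s_ord] by (simp add: tgt_def mapof_def)
qed (use C.is_dmor_elem assms in \<open>simp_all add: src_def tgt_def\<close>)

lemma dsim_Sd_mor:
  assumes "dsim C m m'"
  shows "sd_choice D F (src m) \<sigma> \<Longrightarrow> sd_choice D F (src m') \<sigma>' \<Longrightarrow>
    dsim D (Sd_mor D F m \<sigma>) (Sd_mor D F m' \<sigma>')"
  using assms
proof (induction arbitrary: \<sigma> \<sigma>' rule: dsim.induct)
  case (elem X s d d')
  then show ?case
    using dsim_Sd_mor_elem by (simp add: src_def)
next
  case (refl m)
  have "is_simplex D (fsimp F (tgt m))" "ord_map (mapof m) (dim (fsimp F (src m))) (dim (fsimp F (tgt m)))"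
    using is_dmor_fsimp[OF refl.hyps] unfolding D.is_dmor_iff by auto
  then have "id_linked D (fsimp F (tgt m)) (mapof m ! x) (mapof m ! x)" if "x \<le> dim (src m)" for x
    using D.id_linked_refl ord_map_bound that by simp
  then show ?case
    using dsim_Sd_mor_if_maps_id_linked[OF refl.hyps refl.hyps _ _ refl.prems] by simp
next
  case (sym m m')
  then show ?case
    using dsim.sym by blast
next
  case (trans m m' m'')
  obtain \<sigma>'' where \<sigma>'': "sd_choice D F (src m') \<sigma>''"
    using ex_sd_choice by blast
  show ?case
    using trans.IH(1)[OF trans.prems(1) \<sigma>''] trans.IH(2)[OF \<sigma>'' trans.prems(2)] by (rule dsim.trans)
next
  case (post m m' n)
  have m: "is_dmor C m" "is_dmor C m'" "src m' = src m" "tgt m' = tgt m"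
    using C.dsim_is_dmor[OF post.hyps(1)] by auto
  obtain \<tau> where \<tau>: "sd_choice D F (src n) \<tau>"
    using ex_sd_choice by blast
  have \<sigma>: "sd_choice D F (src m) \<sigma>" "sd_choice D F (src m') \<sigma>'"
    using post.prems by simp_all
  have "src n = tgt m'"
    using post.hyps(3) m(4) by simp
  with post.hyps(3) show ?case
    using dsim_Sd_mor_dcomp[OF post.IH[OF \<sigma>] dsim.refl[OF is_dmor_Sd_mor[OF post.hyps(2) \<tau>]]
        m(1,2) post.hyps(2) post.hyps(2)] \<sigma> \<tau> by blast
next
  case (pre m m' n)
  have m: "is_dmor C m" "is_dmor C m'" "src m' = src m" "tgt m' = tgt m"
    using C.dsim_is_dmor[OF pre.hyps(1)] by auto
  obtain \<tau> where \<tau>: "sd_choice D F (src m) \<tau>"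
    using ex_sd_choice by blast
  have \<sigma>: "sd_choice D F (src n) \<sigma>" "sd_choice D F (src n) \<sigma>'"
    using pre.prems by simp_all
  have \<tau>': "sd_choice D F (src m') \<tau>"
    using m(3) \<tau> by simp
  have "src m' = tgt n"
    using pre.hyps(3) m(3) by simp
  from dsim_Sd_mor_dcomp[OF dsim.refl[OF is_dmor_Sd_mor[OF pre.hyps(2) \<sigma>(1)]] pre.IH[OF \<tau> \<tau>']
      pre.hyps(2) pre.hyps(2) m(1,2) pre.hyps(3)[symmetric] this \<sigma>(1) \<sigma>(1) \<tau> \<tau>' \<sigma>]
  show ?case .
qed

lemma Sd_mor_did:
  assumes "sd_choice D F X \<sigma>"
  shows "Sd_mor D F (did X) \<sigma> = did (Sd_obj D F X)"
  using map_comp_id_left[OF sd_choiceD(1)[OF assms]] assms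
  by (simp add: Sd_mor_def did_def src_def tgt_def mapof_def Sd_obj_def sd_choice_def is_rinv_def)

end

context cat_functor
begin

lemma nondeg_Sd_obj: "is_simplex C X \<Longrightarrow> nondeg D (Sd_obj D F X)"
  unfolding Sd_obj_def using D.nondeg_rr simplex_fsimp by blast

lemma is_sd_mor_Sd_mor:
  assumes "is_dmor C m" "sd_choice D F (src m) \<sigma>"
  shows "is_sd_mor D (Sd_mor D F m \<sigma>)"
  using assms is_dmor_Sd_mor nondeg_Sd_obj by (simp add: is_sd_mor_def is_dmor_def)

end

context category
begin

lemma Sd_obj_id_functor: "nondeg C X \<Longrightarrow> Sd_obj C id_functor X = X"
  using rr_nondeg_eq by (simp add: Sd_obj_def fsimp_id_functor)

lemma Sd_mor_id_functor:
  assumes "is_sd_mor C m" "sd_choice C id_functor (src m) \<sigma>"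
  shows "Sd_mor C id_functor m \<sigma> = m"
proof -
  have \<xi>: "ord_map (mapof m) (dim (src m)) (dim (tgt m))"
    and src: "nondeg C (src m)" and tgt: "nondeg C (tgt m)"
    using assms(1) by (auto simp: is_sd_mor_def is_dmor_def)
  have "ord_map \<sigma> (dim (src m)) (dim (src m))" "map_comp [0..<Suc (dim (src m))] \<sigma> = [0..<Suc (dim (src m))]"
    using assms(2) rr_nondeg_eq[OF src] alpha_nondeg_eq[OF src]
    unfolding sd_choice_def Sd_obj_def is_rinv_def by (auto simp: fsimp_id_functor)
  then have "\<sigma> = [0..<Suc (dim (src m))]"
    using map_comp_id_left by metis
  then show ?thesis
    using rr_nondeg_eq[OF src] rr_nondeg_eq[OF tgt] alpha_nondeg_eq[OF tgt] map_comp_id_left[OF \<xi>]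
      map_comp_id_right[OF ord_map_length[OF \<xi>]]
    by (simp add: Sd_mor_def Sd_obj_def fsimp_id_functor src_def tgt_def mapof_def)
qed

end

locale composable_functors =
  FF: cat_functor C D F + GG: cat_functor D E G
  for C :: "('o1, 'a1) cat" and D :: "('o2, 'a2) cat" and E :: "('o3, 'a3) cat"
    and F :: "('o1, 'a1, 'o2, 'a2) ftor" and G :: "('o2, 'a2, 'o3, 'a3) ftor"
begin

sublocale GF: cat_functor C E "functor_comp G F"
  by unfold_locales (rule is_functor_functor_comp[OF FF.is_functor GG.is_functor])

lemma Sd_obj_functor_comp: "Sd_obj E (functor_comp G F) X = Sd_obj E G (Sd_obj D F X)"
  using rr_fsimp_rr[OF GG.FA_identity] by (simp add: Sd_obj_def fsimp_functor_comp)

lemma alpha_functor_comp: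
  "j \<le> dim V \<Longrightarrow> alpha E (fsimp G (rr D (fsimp F V))) ! (alpha D (fsimp F V) ! j) =
    alpha E (fsimp (functor_comp G F) V) ! j"
  using alpha_fsimp_rr[OF GG.FA_identity] by (simp add: fsimp_functor_comp)

lemma sd_choice_functor_comp:
  assumes \<sigma>1: "sd_choice D F X \<sigma>1" and \<sigma>2: "sd_choice E G (Sd_obj D F X) \<sigma>2"
  shows "sd_choice E (functor_comp G F) X (map_comp \<sigma>1 \<sigma>2)"
proof -
  have dim: "dim (Sd_obj E (functor_comp G F) X) = dim (Sd_obj E G (Sd_obj D F X))"
    using Sd_obj_functor_comp by simp
  have "ord_map \<sigma>1 (dim (Sd_obj D F X)) (dim X)"
    and "ord_map \<sigma>2 (dim (Sd_obj E G (Sd_obj D F X))) (dim (Sd_obj D F X))"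
    using FF.sd_choiceD(1)[OF \<sigma>1] GG.sd_choiceD(1)[OF \<sigma>2] by (simp_all add: Sd_obj_def)
  from ord_map_comp[OF this] have ord:
    "ord_map (map_comp \<sigma>1 \<sigma>2) (dim (Sd_obj E (functor_comp G F) X)) (dim X)"
    using dim by simp
  have "alpha E (fsimp (functor_comp G F) X) ! (map_comp \<sigma>1 \<sigma>2 ! i) = i"
    if i: "i \<le> dim (Sd_obj E (functor_comp G F) X)" for i
  proof -
    have \<sigma>2i: "\<sigma>2 ! i \<le> dim (Sd_obj D F X)"
      using GG.sd_choiceD(3)[OF \<sigma>2] i dim by (simp add: Sd_obj_def)
    have "alpha E (fsimp (functor_comp G F) X) ! (\<sigma>1 ! (\<sigma>2 ! i)) =
        alpha E (fsimp G (Sd_obj D F X)) ! (alpha D (fsimp F X) ! (\<sigma>1 ! (\<sigma>2 ! i)))"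
      using alpha_functor_comp FF.sd_choiceD(3)[OF \<sigma>1] \<sigma>2i by (simp add: Sd_obj_def)
    also have "\<dots> = i"
      using FF.sd_choiceD(2)[OF \<sigma>1] GG.sd_choiceD(2)[OF \<sigma>2] \<sigma>2i i dim by (simp add: Sd_obj_def)
    finally show ?thesis
      using map_comp_nth ord_map_length[OF ord] i by (simp add: less_Suc_eq_le)
  qed
  then show ?thesis
    unfolding sd_choice_def using is_rinvI[OF ord] by blast
qed

lemma Sd_mor_Sd_mor:
  assumes m: "is_dmor C m" and \<sigma>1: "sd_choice D F (src m) \<sigma>1"
    and \<sigma>2: "sd_choice E G (Sd_obj D F (src m)) \<sigma>2"
  shows "Sd_mor E G (Sd_mor D F m \<sigma>1) \<sigma>2 = Sd_mor E (functor_comp G F) m (map_comp \<sigma>1 \<sigma>2)"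
proof -
  have \<xi>: "ord_map (mapof m) (dim (src m)) (dim (tgt m))"
    using m by (simp add: is_dmor_def)
  have \<sigma>1_ord: "ord_map \<sigma>1 (dim (Sd_obj D F (src m))) (dim (src m))"
    using FF.sd_choiceD(1)[OF \<sigma>1] by (simp add: Sd_obj_def)
  have \<sigma>2_ord: "ord_map \<sigma>2 (dim (Sd_obj E G (Sd_obj D F (src m)))) (dim (Sd_obj D F (src m)))"
    using GG.sd_choiceD(1)[OF \<sigma>2] by (simp add: Sd_obj_def)
  have "map_comp (alpha E (fsimp G (Sd_obj D F (tgt m))))
      (map_comp (map_comp (alpha D (fsimp F (tgt m))) (map_comp (mapof m) \<sigma>1)) \<sigma>2) =
    map_comp (alpha E (fsimp (functor_comp G F) (tgt m))) (map_comp (mapof m) (map_comp \<sigma>1 \<sigma>2))"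
  proof (rule nth_equalityI)
    fix i
    assume "i < length (map_comp (alpha E (fsimp G (Sd_obj D F (tgt m))))
      (map_comp (map_comp (alpha D (fsimp F (tgt m))) (map_comp (mapof m) \<sigma>1)) \<sigma>2))"
    then have i: "i \<le> dim (Sd_obj E G (Sd_obj D F (src m)))"
      using ord_map_length[OF \<sigma>2_ord] by simp
    have "\<sigma>1 ! (\<sigma>2 ! i) \<le> dim (src m)"
      using ord_map_bound[OF \<sigma>1_ord] ord_map_bound[OF \<sigma>2_ord] i by blast
    then show "map_comp (alpha E (fsimp G (Sd_obj D F (tgt m))))
        (map_comp (map_comp (alpha D (fsimp F (tgt m))) (map_comp (mapof m) \<sigma>1)) \<sigma>2) ! i =
      map_comp (alpha E (fsimp (functor_comp G F) (tgt m))) (map_comp (mapof m) (map_comp \<sigma>1 \<sigma>2)) ! i"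
      using i alpha_functor_comp[of "mapof m ! (\<sigma>1 ! (\<sigma>2 ! i))" "tgt m"] ord_map_bound[OF \<xi>]
        ord_map_bound[OF \<sigma>2_ord] ord_map_length[OF \<sigma>1_ord] ord_map_length[OF \<sigma>2_ord]
        ord_map_length[OF \<xi>]
      by (simp add: map_comp_nth Sd_obj_def less_Suc_eq_le)
  qed simp
  then show ?thesis
    using Sd_obj_functor_comp by (simp add: Sd_mor_def src_def tgt_def mapof_def)
qed

lemma dsim_Sd_mor_functor_comp:
  assumes m: "is_dmor C m" and \<sigma>: "sd_choice E (functor_comp G F) (src m) \<sigma>"
    and \<sigma>1: "sd_choice D F (src m) \<sigma>1" and \<sigma>2: "sd_choice E G (Sd_obj D F (src m)) \<sigma>2"
  shows "dsim E (Sd_mor E (functor_comp G F) m \<sigma>) (Sd_mor E G (Sd_mor D F m \<sigma>1) \<sigma>2)"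
  using GF.dsim_Sd_mor[OF dsim.refl[OF m] \<sigma> sd_choice_functor_comp[OF \<sigma>1 \<sigma>2]]
    Sd_mor_Sd_mor[OF m \<sigma>1 \<sigma>2] by simp

end

theorem lemma23:
  fixes C :: "('o1, 'a1) cat" and D :: "('o2, 'a2) cat" and E :: "('o3, 'a3) cat"
    and F :: "('o1, 'a1, 'o2, 'a2) ftor" and G :: "('o2, 'a2, 'o3, 'a3) ftor"
  assumes "is_cat C" and "is_cat D" and "is_cat E"
    and "is_functor C D F" and "is_functor D E G"
  shows
    \<comment> \<open>Sd(f) is well defined on objects\<close>
    "(\<forall>X. nondeg C X \<longrightarrow> nondeg D (Sd_obj D F X))
     \<comment> \<open>Sd(f) is well defined on morphisms: a morphism r(fX) -> r(fY), independent of the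
         representative and of the right inverse\<close>
   \<and> (\<forall>m m' \<sigma> \<sigma>'. is_sd_mor C m \<and> is_sd_mor C m' \<and> dsim C m m'
         \<and> sd_choice D F (src m) \<sigma> \<and> sd_choice D F (src m') \<sigma>' \<longrightarrow>
         is_sd_mor D (Sd_mor D F m \<sigma>) \<and> dsim D (Sd_mor D F m \<sigma>) (Sd_mor D F m' \<sigma>'))
     \<comment> \<open>Sd(f) preserves identities\<close>
   \<and> (\<forall>X \<sigma>. nondeg C X \<and> sd_choice D F X \<sigma> \<longrightarrow>
         dsim D (Sd_mor D F (did X) \<sigma>) (did (Sd_obj D F X)))
     \<comment> \<open>Sd(f) preserves composition\<close>
   \<and> (\<forall>m n \<sigma> \<tau> \<rho>. is_sd_mor C m \<and> is_sd_mor C n \<and> src n = tgt m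
         \<and> sd_choice D F (src m) \<sigma> \<and> sd_choice D F (src n) \<tau> \<and> sd_choice D F (src m) \<rho> \<longrightarrow>
         dsim D (Sd_mor D F (dcomp n m) \<rho>) (dcomp (Sd_mor D F n \<tau>) (Sd_mor D F m \<sigma>)))
     \<comment> \<open>Sd(id_C) = id_{Sd(C)}\<close>
   \<and> (\<forall>X. nondeg C X \<longrightarrow> Sd_obj C id_functor X = X)
   \<and> (\<forall>m \<sigma>. is_sd_mor C m \<and> sd_choice C id_functor (src m) \<sigma> \<longrightarrow>
         dsim C (Sd_mor C id_functor m \<sigma>) m)
     \<comment> \<open>Sd(g o f) = Sd(g) o Sd(f)\<close>
   \<and> (\<forall>X. nondeg C X \<longrightarrow> Sd_obj E (functor_comp G F) X = Sd_obj E G (Sd_obj D F X))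
   \<and> (\<forall>m \<sigma> \<sigma>1 \<sigma>2. is_sd_mor C m \<and> sd_choice E (functor_comp G F) (src m) \<sigma>
         \<and> sd_choice D F (src m) \<sigma>1 \<and> sd_choice E G (Sd_obj D F (src m)) \<sigma>2 \<longrightarrow>
         dsim E (Sd_mor E (functor_comp G F) m \<sigma>)
                (Sd_mor E G (Sd_mor D F m \<sigma>1) \<sigma>2))"
proof -
  interpret composable_functors C D E F G
    using assms by (simp add: composable_functors_def cat_functor_def cat_functor_axioms_def
        category_def)
  have sd_mor: "is_sd_mor C m \<Longrightarrow> is_dmor C m" for m
    by (simp add: is_sd_mor_def)
  have nondeg: "nondeg C X \<Longrightarrow> is_simplex C X" for X
    by (simp add: nondeg_def)
  show ?thesis
    apply (intro conjI allI impI; (elim conjE)?)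
    subgoal using FF.nondeg_Sd_obj nondeg by blast
    subgoal using FF.is_sd_mor_Sd_mor sd_mor by blast
    subgoal using FF.dsim_Sd_mor by blast
    subgoal for X \<sigma>
      using FF.Sd_mor_did[of X \<sigma>] dsim.refl[OF FF.D.is_dmor_did] FF.nondeg_Sd_obj[of X] nondeg
      by (simp add: nondeg_def)
    subgoal using FF.Sd_mor_dcomp sd_mor by blast
    subgoal using FF.C.Sd_obj_id_functor by blast
    subgoal using FF.C.Sd_mor_id_functor dsim.refl sd_mor by metis
    subgoal using Sd_obj_functor_comp by blast
    subgoal using dsim_Sd_mor_functor_comp sd_mor by blast
    done
qed

end
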